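(* Assume Assumptions 1 and 2 hold. As $n,N\to\infty$ with $n/N\to a\in(0,+\infty)$, $$\frac1n\sum_{i\neq j}G_N(i,j)^2\ \longrightarrow\ a\quad\text{in probability},$$ where the sum runs over ordered pairs $i\neq j$ in $\{1,\dots,n\}$.
   Context: Let $A=(A_{i,k})_{1\le i\le n,\,1\le k\le N}$ be a random matrix with independent columns, such that for each $k$ the entries $A_{1,k},\dots,A_{n,k}$ are i.i.d.; write $m_k=\mathbb{E}[A_{1,k}]$ and $\sigma_k^2=\mathrm{Var}(A_{1,k})$. Put $\bar A_k=\frac1n\sum_{i=1}^n A_{i,k}$, $s_k^2=\frac1n\sum_{i=1}^n(A_{i,k}-\bar A_k)^2$ (assumed $>0$ a.s.), and $Z_{i,k}=(A_{i,k}-\bar A_k)/s_k$. Let $G_N(i,j)=\frac1N\sum_{k=1}^N Z_{i,k}Z_{j,k}$. Assumption 1: there exist $d>0$, $C>0$ and a neighborhood $V_0$ of $0$ such that for all $\lambda\in V_0$, all $i\neq j$ and all $k$: (1.1) $\mathbb{E}[\exp(\lambda((A_{i,k}-m_k)^2-\sigma_k^2))]\le C\exp(d\lambda^2)$; (1.2) $\mathbb{E}[\exp(\lambda(A_{i,k}-m_k))]\le C\exp(d\lambda^2)$; (1.3) $\mathbb{E}[\exp(\lambda(A_{i,k}-m_k)(A_{j,k}-m_k))]\le C\exp(d\lambda^2)$. Assumption 2: (2.1) $\inf_{k}\sigma_k^2=\delta_{min}>0$; (2.2) $\sup_k\sigma_k^2=\delta_{max}<+\infty$ (uniformly in $N$).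 *)

theory Defs
  imports "HOL-Probability.Probability"
begin

text \<open>A single random matrix is given as A :: nat => nat => 'a => real, with
  A i k the entry in row i (1..n) and column k (1..N).\<close>

definition col_mean :: "nat \<Rightarrow> (nat \<Rightarrow> nat \<Rightarrow> 'a \<Rightarrow> real) \<Rightarrow> nat \<Rightarrow> 'a \<Rightarrow> real" where
  "col_mean n A k \<omega> = (\<Sum>i=1..n. A i k \<omega>) / real n"

definition col_svar :: "nat \<Rightarrow> (nat \<Rightarrow> nat \<Rightarrow> 'a \<Rightarrow> real) \<Rightarrow> nat \<Rightarrow> 'a \<Rightarrow> real" where
  "col_svar n A k \<omega> = (\<Sum>i=1..n. (A i k \<omega> - col_mean n A k \<omega>)^2) / real n"

definition Zmat :: "nat \<Rightarrow> (nat \<Rightarrow> nat \<Rightarrow> 'a \<Rightarrow> real) \<Rightarrow> nat \<Rightarrow> nat \<Rightarrow> 'a \<Rightarrow> real" where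
  "Zmat n A i k \<omega> = (A i k \<omega> - col_mean n A k \<omega>) / sqrt (col_svar n A k \<omega>)"

definition Gmat :: "nat \<Rightarrow> nat \<Rightarrow> (nat \<Rightarrow> nat \<Rightarrow> 'a \<Rightarrow> real) \<Rightarrow> nat \<Rightarrow> nat \<Rightarrow> 'a \<Rightarrow> real" where
  "Gmat n N A i j \<omega> = (\<Sum>k=1..N. Zmat n A i k \<omega> * Zmat n A j k \<omega>) / real N"

definition col_mu :: "'a measure \<Rightarrow> (nat \<Rightarrow> nat \<Rightarrow> 'a \<Rightarrow> real) \<Rightarrow> nat \<Rightarrow> real" where
  "col_mu M A k = prob_space.expectation M (A 1 k)"

definition col_sig2 :: "'a measure \<Rightarrow> (nat \<Rightarrow> nat \<Rightarrow> 'a \<Rightarrow> real) \<Rightarrow> nat \<Rightarrow> real" where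
  "col_sig2 M A k = prob_space.variance M (A 1 k)"

end

theory Submission
  imports Defs
begin

text \<open>Write z_ik for the standardized entries. Every column of z sums to 0 and, almost surely,
  has squared norm n. Expanding the square,
    (1/n) \<Sum>_{i\<noteq>j} G(i,j)^2 = (1/(n N^2)) \<Sum>_{k,l} \<Sum>_{i\<noteq>j} z_ik z_jk z_il z_jl.
  The diagonal terms k = l give n/N minus a nonnegative fourth-power term, which is O(1/N) in L^1
  because the exponential moments of (A_ik - m_k)^2 bound all fourth moments uniformly.
  Exchangeability of the rows gives E z_ik z_jk = \<rho> = -1/(n-1) for i \<noteq> j, so for k \<noteq> l the inner
  sum is n/(n-1) plus the overlap W_kl = \<Sum>_{i\<noteq>j} (z_ik z_jk - \<rho>)(z_il z_jl - \<rho>). By independence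
  of the columns, overlaps of different unordered pairs {k,l} are orthogonal and E W_kl^2 = O(n^3),
  so \<Sum>_{k\<noteq>l} W_kl / (n N^2) has second moment O(n/N^2). Markov's inequality for the two random
  terms gives convergence in probability to lim n/N = a.\<close>

section \<open>Integrals of products of independent variables\<close>

lemma integral_double_sum:
  fixes f :: "'i \<Rightarrow> 'j \<Rightarrow> 'a \<Rightarrow> real"
  assumes int: "\<And>i j. i \<in> I \<Longrightarrow> j \<in> J \<Longrightarrow> integrable M (f i j)"
  shows "(\<integral>\<omega>. (\<Sum>i\<in>I. \<Sum>j\<in>J. f i j \<omega>) \<partial>M) = (\<Sum>i\<in>I. \<Sum>j\<in>J. \<integral>\<omega>. f i j \<omega> \<partial>M)"
    and "integrable M (\<lambda>\<omega>. \<Sum>i\<in>I. \<Sum>j\<in>J. f i j \<omega>)"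
proof -
  have inner: "integrable M (\<lambda>\<omega>. \<Sum>j\<in>J. f i j \<omega>)" if "i \<in> I" for i
    using int that by (intro Bochner_Integration.integrable_sum) auto
  then show "integrable M (\<lambda>\<omega>. \<Sum>i\<in>I. \<Sum>j\<in>J. f i j \<omega>)"
    by (rule Bochner_Integration.integrable_sum)
  have "(\<integral>\<omega>. (\<Sum>i\<in>I. \<Sum>j\<in>J. f i j \<omega>) \<partial>M) = (\<Sum>i\<in>I. \<integral>\<omega>. (\<Sum>j\<in>J. f i j \<omega>) \<partial>M)"
    using inner by (rule Bochner_Integration.integral_sum)
  also have "\<dots> = (\<Sum>i\<in>I. \<Sum>j\<in>J. \<integral>\<omega>. f i j \<omega> \<partial>M)"
    using int by (intro sum.cong refl Bochner_Integration.integral_sum) auto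
  finally show "(\<integral>\<omega>. (\<Sum>i\<in>I. \<Sum>j\<in>J. f i j \<omega>) \<partial>M) = (\<Sum>i\<in>I. \<Sum>j\<in>J. \<integral>\<omega>. f i j \<omega> \<partial>M)" .
qed

lemma (in prob_space) indep_vars_measurable:
  "indep_vars Mc X I \<Longrightarrow> i \<in> I \<Longrightarrow> X i \<in> measurable M (Mc i)"
  unfolding indep_vars_def by auto

lemma (in prob_space) indep_vars_integral_prod:
  fixes g :: "'i \<Rightarrow> 'b \<Rightarrow> real"
  assumes ind: "indep_vars Mc X I" and fin: "finite S" and sub: "S \<subseteq> I"
    and g: "\<And>i. i \<in> S \<Longrightarrow> g i \<in> borel_measurable (Mc i)"
    and int: "\<And>i. i \<in> S \<Longrightarrow> integrable M (\<lambda>\<omega>. g i (X i \<omega>))"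
  shows "(\<integral>\<omega>. (\<Prod>i\<in>S. g i (X i \<omega>)) \<partial>M) = (\<Prod>i\<in>S. \<integral>\<omega>. g i (X i \<omega>) \<partial>M)"
    and "integrable M (\<lambda>\<omega>. \<Prod>i\<in>S. g i (X i \<omega>))"
proof -
  have "indep_vars (\<lambda>_. borel) (\<lambda>i \<omega>. g i (X i \<omega>)) S"
    by (rule indep_vars_compose2[OF indep_vars_subset[OF ind sub]]) (use g in auto)
  then show "(\<integral>\<omega>. (\<Prod>i\<in>S. g i (X i \<omega>)) \<partial>M) = (\<Prod>i\<in>S. \<integral>\<omega>. g i (X i \<omega>) \<partial>M)"
    and "integrable M (\<lambda>\<omega>. \<Prod>i\<in>S. g i (X i \<omega>))"
    using indep_vars_lebesgue_integral[OF fin _ int] indep_vars_integrable[OF fin _ int] by auto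
qed

text \<open>Several factors \<open>t\<close> may depend on the same variable \<open>X (blk t)\<close>; one factor that is alone
  with its variable and has mean zero kills the whole product.\<close>

lemma (in prob_space) indep_vars_integral_prod_eq_0:
  fixes Y :: "'i \<Rightarrow> 'p \<Rightarrow> 'b \<Rightarrow> real" and blk :: "'t \<Rightarrow> 'i"
  assumes ind: "indep_vars Mc X I" and fin: "finite T" and blk: "blk ` T \<subseteq> I"
    and Y_meas: "\<And>i p. i \<in> I \<Longrightarrow> Y i p \<in> borel_measurable (Mc i)"
    and Y_bound: "\<And>i p x. i \<in> I \<Longrightarrow> x \<in> space (Mc i) \<Longrightarrow> \<bar>Y i p x\<bar> \<le> B"
    and t_alone_mem: "t_alone \<in> T" and alone: "\<And>t. t \<in> T \<Longrightarrow> blk t = blk t_alone \<Longrightarrow> t = t_alone"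
    and mean_0: "(\<integral>\<omega>. Y (blk t_alone) (lbl t_alone) (X (blk t_alone) \<omega>) \<partial>M) = 0"
  shows "(\<integral>\<omega>. (\<Prod>t\<in>T. Y (blk t) (lbl t) (X (blk t) \<omega>)) \<partial>M) = 0"
proof -
  define g where "g i x = (\<Prod>t\<in>{t\<in>T. blk t = i}. Y i (lbl t) x)" for i x
  have regroup: "(\<Prod>t\<in>T. Y (blk t) (lbl t) (X (blk t) \<omega>)) = (\<Prod>i\<in>blk ` T. g i (X i \<omega>))" for \<omega>
    unfolding g_def by (subst prod.image_gen[OF fin, where g=blk]) (auto intro!: prod.cong)
  have g_meas: "g i \<in> borel_measurable (Mc i)" if "i \<in> blk ` T" for i
    unfolding g_def using that blk Y_meas by (intro borel_measurable_prod) auto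
  have g_int: "integrable M (\<lambda>\<omega>. g i (X i \<omega>))" if i: "i \<in> blk ` T" for i
  proof (rule integrable_const_bound[where B="B ^ card {t\<in>T. blk t = i}"])
    have X_meas: "X i \<in> measurable M (Mc i)" using indep_vars_measurable[OF ind] i blk by auto
    show "AE \<omega> in M. norm (g i (X i \<omega>)) \<le> B ^ card {t\<in>T. blk t = i}"
    proof (rule AE_I2)
      fix \<omega> assume "\<omega> \<in> space M"
      then have "X i \<omega> \<in> space (Mc i)" using X_meas by (auto simp: measurable_def)
      then show "norm (g i (X i \<omega>)) \<le> B ^ card {t\<in>T. blk t = i}"
        unfolding g_def real_norm_def abs_prod using i blk Y_bound
        by (subst prod_constant[symmetric]) (intro prod_mono, auto)
    qed
    show "(\<lambda>\<omega>. g i (X i \<omega>)) \<in> borel_measurable M"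
      using measurable_comp[OF X_meas g_meas[OF i]] by (simp add: comp_def)
  qed
  have "{t\<in>T. blk t = blk t_alone} = {t_alone}" using t_alone_mem alone by auto
  then have "(\<integral>\<omega>. g (blk t_alone) (X (blk t_alone) \<omega>) \<partial>M) = 0" using mean_0 by (simp add: g_def)
  then have "(\<Prod>i\<in>blk ` T. \<integral>\<omega>. g i (X i \<omega>) \<partial>M) = 0"
    using t_alone_mem fin by (intro prod_zero) auto
  then show ?thesis
    unfolding regroup by (subst indep_vars_integral_prod(1)[OF ind _ blk g_meas g_int]) (use fin in auto)
qed

lemma (in prob_space) indep_vars_integral_mult:
  fixes X :: "'i \<Rightarrow> 'a \<Rightarrow> real"
  assumes ind: "indep_vars (\<lambda>_. borel) X I" and ij: "i \<in> I" "j \<in> I" "i \<noteq> j"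
    and int: "integrable M (X i)" "integrable M (X j)"
  shows "(\<integral>\<omega>. X i \<omega> * X j \<omega> \<partial>M) = (\<integral>\<omega>. X i \<omega> \<partial>M) * (\<integral>\<omega>. X j \<omega> \<partial>M)"
    and "integrable M (\<lambda>\<omega>. X i \<omega> * X j \<omega>)"
proof -
  have pair: "(\<lambda>\<omega>. \<Prod>c\<in>{i,j}. X c \<omega>) = (\<lambda>\<omega>. X i \<omega> * X j \<omega>)" using ij by auto
  show "(\<integral>\<omega>. X i \<omega> * X j \<omega> \<partial>M) = (\<integral>\<omega>. X i \<omega> \<partial>M) * (\<integral>\<omega>. X j \<omega> \<partial>M)"
    using indep_vars_integral_prod(1)[OF ind, of "{i,j}" "\<lambda>_ x. x"] ij int unfolding pair by auto
  show "integrable M (\<lambda>\<omega>. X i \<omega> * X j \<omega>)"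
    using indep_vars_integral_prod(2)[OF ind, of "{i,j}" "\<lambda>_ x. x"] ij int unfolding pair by auto
qed

lemma (in prob_space) indep_vars_integral_sum_square:
  fixes X :: "'i \<Rightarrow> 'a \<Rightarrow> real"
  assumes ind: "indep_vars (\<lambda>_. borel) X I" and fin: "finite I"
    and sq: "\<And>i. i \<in> I \<Longrightarrow> integrable M (\<lambda>\<omega>. X i \<omega> ^ 2)"
    and mean_0: "\<And>i. i \<in> I \<Longrightarrow> (\<integral>\<omega>. X i \<omega> \<partial>M) = 0"
  shows "(\<integral>\<omega>. (\<Sum>i\<in>I. X i \<omega>)^2 \<partial>M) = (\<Sum>i\<in>I. \<integral>\<omega>. X i \<omega> ^ 2 \<partial>M)"
    and "integrable M (\<lambda>\<omega>. (\<Sum>i\<in>I. X i \<omega>)^2)"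
proof -
  have int: "integrable M (X i)" if "i \<in> I" for i
    using indep_vars_measurable[OF ind that] sq[OF that] by (rule square_integrable_imp_integrable)
  have prod_int: "integrable M (\<lambda>\<omega>. X i \<omega> * X j \<omega>)" if ij: "i \<in> I" "j \<in> I" for i j
  proof (cases "i = j")
    case True then show ?thesis using sq[OF ij(1)] by (simp add: power2_eq_square)
  next
    case False then show ?thesis by (rule indep_vars_integral_mult(2)[OF ind ij _ int[OF ij(1)] int[OF ij(2)]])
  qed
  have prod_integral: "(\<integral>\<omega>. X i \<omega> * X j \<omega> \<partial>M) = (if j = i then \<integral>\<omega>. X i \<omega> ^ 2 \<partial>M else 0)"
    if ij: "i \<in> I" "j \<in> I" for i j
  proof (cases "j = i")
    case True then show ?thesis by (simp add: power2_eq_square)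
  next
    case False
    then show ?thesis
      using indep_vars_integral_mult(1)[OF ind ij _ int[OF ij(1)] int[OF ij(2)]] mean_0[OF ij(1)] by simp
  qed
  have expand: "(\<lambda>\<omega>. (\<Sum>i\<in>I. X i \<omega>)^2) = (\<lambda>\<omega>. \<Sum>i\<in>I. \<Sum>j\<in>I. X i \<omega> * X j \<omega>)"
    by (simp add: power2_eq_square sum_product)
  show "integrable M (\<lambda>\<omega>. (\<Sum>i\<in>I. X i \<omega>)^2)"
    unfolding expand using prod_int by (rule integral_double_sum(2))
  have "(\<integral>\<omega>. (\<Sum>i\<in>I. X i \<omega>)^2 \<partial>M) = (\<Sum>i\<in>I. \<Sum>j\<in>I. \<integral>\<omega>. X i \<omega> * X j \<omega> \<partial>M)"
    unfolding expand using prod_int by (rule integral_double_sum(1))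
  also have "\<dots> = (\<Sum>i\<in>I. \<Sum>j\<in>I. if j = i then \<integral>\<omega>. X i \<omega> ^ 2 \<partial>M else 0)"
    by (intro sum.cong refl prod_integral) auto
  also have "\<dots> = (\<Sum>i\<in>I. \<integral>\<omega>. X i \<omega> ^ 2 \<partial>M)"
    using fin by simp
  finally show "(\<integral>\<omega>. (\<Sum>i\<in>I. X i \<omega>)^2 \<partial>M) = (\<Sum>i\<in>I. \<integral>\<omega>. X i \<omega> ^ 2 \<partial>M)" .
qed

section \<open>Standardized vectors\<close>

definition sample_mean :: "nat \<Rightarrow> (nat \<Rightarrow> real) \<Rightarrow> real" where
  "sample_mean n x = (\<Sum>i=1..n. x i) / real n"

definition sample_var :: "nat \<Rightarrow> (nat \<Rightarrow> real) \<Rightarrow> real" where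
  "sample_var n x = (\<Sum>i=1..n. (x i - sample_mean n x)^2) / real n"

definition standardize :: "nat \<Rightarrow> nat \<Rightarrow> (nat \<Rightarrow> real) \<Rightarrow> real" where
  "standardize n i x = (x i - sample_mean n x) / sqrt (sample_var n x)"

lemma Zmat_eq_standardize: "Zmat n A i k \<omega> = standardize n i (\<lambda>i. A i k \<omega>)"
  and col_svar_eq_sample_var: "col_svar n A k \<omega> = sample_var n (\<lambda>i. A i k \<omega>)"
  by (simp_all add: Zmat_def standardize_def col_svar_def col_mean_def sample_var_def sample_mean_def)

lemma sample_mean_cong: "(\<And>j. j \<in> {1..n} \<Longrightarrow> x j = y j) \<Longrightarrow> sample_mean n x = sample_mean n y"
  unfolding sample_mean_def by (metis sum.cong)

lemma sample_var_cong: "(\<And>j. j \<in> {1..n} \<Longrightarrow> x j = y j) \<Longrightarrow> sample_var n x = sample_var n y"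
  unfolding sample_var_def using sample_mean_cong[of n x y] by (metis (no_types, lifting) sum.cong)

lemma standardize_cong:
  "(\<And>j. j \<in> {1..n} \<Longrightarrow> x j = y j) \<Longrightarrow> i \<in> {1..n} \<Longrightarrow> standardize n i x = standardize n i y"
  unfolding standardize_def using sample_mean_cong[of n x y] sample_var_cong[of n x y] by simp

lemma sample_var_nonneg: "sample_var n x \<ge> 0"
  unfolding sample_var_def by (intro divide_nonneg_nonneg sum_nonneg) auto

lemma sample_var_eq: "n \<ge> 1 \<Longrightarrow> sample_var n x = (\<Sum>i=1..n. x i ^ 2) / real n - sample_mean n x ^ 2"
proof -
  assume n: "n \<ge> 1"
  have "(\<Sum>i=1..n. (x i - sample_mean n x)^2)
      = (\<Sum>i=1..n. x i ^ 2) - 2 * sample_mean n x * (\<Sum>i=1..n. x i) + real n * sample_mean n x ^ 2"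
    by (simp add: power2_eq_square algebra_simps sum.distrib sum_subtractf sum_distrib_left)
  also have "(\<Sum>i=1..n. x i) = real n * sample_mean n x" using n unfolding sample_mean_def by simp
  finally show ?thesis unfolding sample_var_def using n by (simp add: field_simps power2_eq_square)
qed

lemma sample_mean_add_const: "n \<ge> 1 \<Longrightarrow> sample_mean n (\<lambda>j. x j + c) = sample_mean n x + c"
  unfolding sample_mean_def by (simp add: sum.distrib field_simps)

lemma sample_var_add_const: "n \<ge> 1 \<Longrightarrow> sample_var n (\<lambda>j. x j + c) = sample_var n x"
  unfolding sample_var_def using sample_mean_add_const by simp

lemma standardize_add_const: "n \<ge> 1 \<Longrightarrow> standardize n i (\<lambda>j. x j + c) = standardize n i x"
  unfolding standardize_def using sample_mean_add_const sample_var_add_const by simp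

lemma standardize_permute:
  assumes "\<sigma> permutes {1..n}"
  shows "standardize n i (\<lambda>j. x (\<sigma> j)) = standardize n (\<sigma> i) x"
proof -
  have permute: "(\<Sum>j=1..n. f (\<sigma> j)) = (\<Sum>j=1..n. f j)" for f :: "nat \<Rightarrow> real"
    using sum.permute[OF assms, of f] by (simp add: comp_def)
  have mean: "sample_mean n (\<lambda>j. x (\<sigma> j)) = sample_mean n x"
    unfolding sample_mean_def using permute[of x] by simp
  have var: "sample_var n (\<lambda>j. x (\<sigma> j)) = sample_var n x"
    unfolding sample_var_def mean using permute[of "\<lambda>j. (x j - sample_mean n x)^2"] by simp
  show ?thesis unfolding standardize_def mean var ..
qed

lemma standardize_measurable:
  "i \<in> {1..n} \<Longrightarrow> standardize n i \<in> borel_measurable (PiM {1..n} (\<lambda>_. borel))"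
  unfolding standardize_def sample_var_def sample_mean_def by measurable

lemma sum_standardize: "(\<Sum>i=1..n. standardize n i x) = 0"
proof -
  have "(\<Sum>i=1..n. standardize n i x) = (\<Sum>i=1..n. (x i - sample_mean n x)) / sqrt (sample_var n x)"
    unfolding standardize_def by (simp add: sum_divide_distrib)
  also have "(\<Sum>i=1..n. (x i - sample_mean n x)) = 0"
    by (cases "n = 0") (simp_all add: sum_subtractf sample_mean_def)
  finally show ?thesis by simp
qed

lemma sum_standardize_sq:
  assumes "sample_var n x > 0" shows "(\<Sum>i=1..n. standardize n i x ^ 2) = real n"
proof -
  have n: "n > 0" using assms by (cases "n = 0") (auto simp: sample_var_def)
  have "(\<Sum>i=1..n. standardize n i x ^ 2) = (\<Sum>i=1..n. (x i - sample_mean n x)^2) / sample_var n x"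
    unfolding standardize_def using sample_var_nonneg[of n x]
    by (simp add: power_divide sum_divide_distrib)
  also have "\<dots> = real n" using assms n unfolding sample_var_def by (simp add: field_simps)
  finally show ?thesis .
qed

text \<open>When the sample variance vanishes, all standardized entries are \<open>0\<close> (division by zero),
  so the following bounds hold unconditionally.\<close>

lemma sum_standardize_sq_le: "(\<Sum>i=1..n. standardize n i x ^ 2) \<le> real n"
proof (cases "sample_var n x > 0")
  case True then show ?thesis using sum_standardize_sq by simp
next
  case False
  then have "sample_var n x = 0" using sample_var_nonneg[of n x] by simp
  then show ?thesis by (simp add: standardize_def)
qed

lemma standardize_sq_le: "i \<in> {1..n} \<Longrightarrow> standardize n i x ^ 2 \<le> real n"
  using member_le_sum[of i "{1..n}" "\<lambda>i. standardize n i x ^ 2"] sum_standardize_sq_le[of n x]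
  by auto

lemma abs_standardize_le: "i \<in> {1..n} \<Longrightarrow> \<bar>standardize n i x\<bar> \<le> sqrt (real n)"
  using standardize_sq_le by (intro real_le_rsqrt) simp

lemma abs_standardize_mult_le:
  assumes "i \<in> {1..n}" "j \<in> {1..n}"
  shows "\<bar>standardize n i x * standardize n j x\<bar> \<le> real n"
proof -
  have "\<bar>standardize n i x * standardize n j x\<bar> \<le> sqrt (real n) * sqrt (real n)"
    unfolding abs_mult using assms by (intro mult_mono abs_standardize_le) auto
  then show ?thesis by simp
qed

lemma power4_diff_le: "((a::real) - b)^4 \<le> 8 * a^4 + 8 * b^4"
proof -
  have "(a - b)^2 \<le> 2 * (a^2 + b^2)" using sum_squares_ge_zero[of "a+b" 0]
    by (simp add: power2_eq_square algebra_simps)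
  then have "((a - b)^2)^2 \<le> (2 * (a^2 + b^2))^2" by (rule power_mono) simp
  moreover have "(2 * (a^2 + b^2))^2 \<le> 8 * a^4 + 8 * b^4"
    using zero_le_square[of "a^2 - b^2"] by (simp add: power2_eq_square algebra_simps power4_eq_xxxx)
  ultimately show ?thesis by simp
qed

lemma sample_mean_power4_le:
  assumes n: "n \<ge> 1" shows "real n * sample_mean n x ^ 4 \<le> (\<Sum>i=1..n. x i ^ 4)"
proof -
  have "(\<Sum>i=1..n. x i)^2 \<le> (\<Sum>i=1..n. x i ^ 2) * real n"
    using sum_squared_le_sum_of_squares[of x "{1..n}"] by simp
  then have mean_sq: "sample_mean n x ^ 2 \<le> (\<Sum>i=1..n. x i ^ 2) / real n"
    unfolding sample_mean_def using n by (simp add: power_divide field_simps power2_eq_square)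
  have sq_sq: "(\<Sum>i=1..n. x i ^ 2)^2 \<le> (\<Sum>i=1..n. (x i ^ 2)^2) * real n"
    using sum_squared_le_sum_of_squares[of "\<lambda>i. x i ^ 2" "{1..n}"] by simp
  have "sample_mean n x ^ 4 = (sample_mean n x ^ 2)^2" by simp
  also have "\<dots> \<le> ((\<Sum>i=1..n. x i ^ 2) / real n)^2" by (rule power_mono[OF mean_sq]) simp
  also have "\<dots> \<le> (\<Sum>i=1..n. x i ^ 4) / real n"
    using sq_sq n by (simp add: power_divide field_simps power2_eq_square power4_eq_xxxx)
  finally show ?thesis using n by (simp add: field_simps)
qed

lemma sum_centered_power4_le:
  assumes n: "n \<ge> 1" shows "(\<Sum>i=1..n. (x i - sample_mean n x)^4) \<le> 16 * (\<Sum>i=1..n. x i ^ 4)"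
proof -
  have "(\<Sum>i=1..n. (x i - sample_mean n x)^4) \<le> (\<Sum>i=1..n. 8 * x i ^ 4 + 8 * sample_mean n x ^ 4)"
    by (intro sum_mono power4_diff_le)
  also have "\<dots> = 8 * (\<Sum>i=1..n. x i ^ 4) + 8 * (real n * sample_mean n x ^ 4)"
    by (simp add: sum.distrib sum_distrib_left)
  also have "\<dots> \<le> 16 * (\<Sum>i=1..n. x i ^ 4)" using sample_mean_power4_le[OF n, of x] by simp
  finally show ?thesis .
qed

lemma sum_standardize_power4_le_square: "(\<Sum>i=1..n. standardize n i x ^ 4) \<le> real n ^ 2"
proof -
  have "(\<Sum>i=1..n. standardize n i x ^ 4) \<le> (\<Sum>i=1..n. real n * standardize n i x ^ 2)"
  proof (rule sum_mono)
    fix i assume "i \<in> {1..n}"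
    then have "standardize n i x ^ 2 * standardize n i x ^ 2 \<le> real n * standardize n i x ^ 2"
      by (intro mult_right_mono standardize_sq_le) auto
    then show "standardize n i x ^ 4 \<le> real n * standardize n i x ^ 2"
      by (simp add: power4_eq_xxxx power2_eq_square)
  qed
  also have "\<dots> \<le> real n * real n"
    unfolding sum_distrib_left[symmetric] by (intro mult_left_mono sum_standardize_sq_le) auto
  finally show ?thesis by (simp add: power2_eq_square)
qed

lemma sum_standardize_power4_le_large_var:
  assumes n: "n \<ge> 1" and s: "s > 0" and var: "sample_var n x \<ge> s / 2"
  shows "(\<Sum>i=1..n. standardize n i x ^ 4) \<le> 64 * (\<Sum>i=1..n. x i ^ 4) / s^2"
proof -
  let ?m = "sample_mean n x" and ?v = "sample_var n x"
  have "sqrt ?v ^ 4 = (sqrt ?v ^ 2)^2" by (simp flip: power_mult)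
  also have "\<dots> = ?v^2" using sample_var_nonneg[of n x] by simp
  finally have "(\<Sum>i=1..n. standardize n i x ^ 4) = (\<Sum>i=1..n. (x i - ?m)^4) / ?v^2"
    unfolding standardize_def power_divide by (simp add: sum_divide_distrib)
  also have "\<dots> \<le> (\<Sum>i=1..n. (x i - ?m)^4) / (s/2)^2"
    using var s by (intro divide_left_mono sum_nonneg power_mono mult_pos_pos) auto
  also have "\<dots> \<le> (16 * (\<Sum>i=1..n. x i ^ 4)) / (s/2)^2"
    using sum_centered_power4_le[OF n] s by (intro divide_right_mono) auto
  also have "\<dots> = 64 * (\<Sum>i=1..n. x i ^ 4) / s^2" using s by (simp add: power2_eq_square field_simps)
  finally show ?thesis .
qed

text \<open>If the sample variance is below \<open>s/2\<close>, either the sample mean or the mean of the squares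
  is far from its reference value (\<open>0\<close> and \<open>s\<close>), by at least \<open>s/4\<close>.\<close>

lemma small_var_deviation:
  assumes n: "n \<ge> 1" and s: "s > 0" and var: "sample_var n x < s / 2"
  shows "real n ^ 2 \<le> 16 * (\<Sum>i=1..n. x i ^ 2 - s)^2 / s^2 + 4 * (\<Sum>i=1..n. x i)^2 / s"
proof -
  let ?m = "sample_mean n x"
  have sum_x: "(\<Sum>i=1..n. x i) = real n * ?m" using n by (simp add: sample_mean_def)
  have sum_sq: "(\<Sum>i=1..n. x i ^ 2 - s) = real n * (sample_var n x + ?m^2 - s)"
    using sample_var_eq[OF n, of x] n by (simp add: sum_subtractf field_simps)
  have nonneg: "0 \<le> 16 * (\<Sum>i=1..n. x i ^ 2 - s)^2 / s^2" "0 \<le> 4 * (\<Sum>i=1..n. x i)^2 / s"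
    using s by simp_all
  show ?thesis
  proof (cases "?m^2 \<le> s / 4")
    case True
    then have "sample_var n x + ?m^2 - s < - (s / 4)" using var by simp
    then have "s / 4 \<le> \<bar>sample_var n x + ?m^2 - s\<bar>" by (simp add: abs_if)
    then have "(s / 4)^2 \<le> (sample_var n x + ?m^2 - s)^2"
      using s by (simp add: abs_le_square_iff[symmetric])
    then have "real n ^ 2 * (s / 4)^2 \<le> (\<Sum>i=1..n. x i ^ 2 - s)^2"
      unfolding sum_sq power_mult_distrib by (intro mult_left_mono) auto
    then have "real n ^ 2 \<le> 16 * (\<Sum>i=1..n. x i ^ 2 - s)^2 / s^2"
      using s by (simp add: field_simps power2_eq_square)
    then show ?thesis using nonneg by linarith
  next
    case False
    then have "1 \<le> 4 * ?m^2 / s" using s by (simp add: field_simps)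
    then have "real n ^ 2 * 1 \<le> real n ^ 2 * (4 * ?m^2 / s)" by (intro mult_left_mono) auto
    also have "\<dots> = 4 * (\<Sum>i=1..n. x i)^2 / s" unfolding sum_x by (simp add: power_mult_distrib)
    finally show ?thesis using nonneg by linarith
  qed
qed

lemma sum_standardize_power4_le:
  assumes n: "n \<ge> 1" and s: "s > 0"
  shows "(\<Sum>i=1..n. standardize n i x ^ 4)
    \<le> 64 * (\<Sum>i=1..n. x i ^ 4) / s^2 + 16 * (\<Sum>i=1..n. x i ^ 2 - s)^2 / s^2 + 4 * (\<Sum>i=1..n. x i)^2 / s"
proof (cases "sample_var n x \<ge> s / 2")
  case True
  have "0 \<le> 16 * (\<Sum>i=1..n. x i ^ 2 - s)^2 / s^2 + 4 * (\<Sum>i=1..n. x i)^2 / s"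
    using s by simp
  then show ?thesis using sum_standardize_power4_le_large_var[OF n s True] by linarith
next
  case False
  then have "sample_var n x < s / 2" by simp
  moreover have "0 \<le> 64 * (\<Sum>i=1..n. x i ^ 4) / s^2" by (simp add: sum_nonneg)
  ultimately show ?thesis
    using sum_standardize_power4_le_square[of n x] small_var_deviation[OF n s, of x] by linarith
qed

lemma sum_mult_le_sum_mult_sum:
  fixes a b :: "'i \<Rightarrow> real"
  assumes "finite S" "\<And>i. i \<in> S \<Longrightarrow> a i \<ge> 0" "\<And>i. i \<in> S \<Longrightarrow> b i \<ge> 0"
  shows "(\<Sum>i\<in>S. a i * b i) \<le> (\<Sum>i\<in>S. a i) * (\<Sum>i\<in>S. b i)"
proof -
  have "(\<Sum>i\<in>S. a i * b i) \<le> (\<Sum>i\<in>S. a i * (\<Sum>j\<in>S. b j))"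
    by (intro sum_mono mult_left_mono member_le_sum) (use assms in auto)
  then show ?thesis by (simp add: sum_distrib_right)
qed

lemma square_diff3_le: "((a::real) - b - c)^2 \<le> 3 * a^2 + 3 * b^2 + 3 * c^2"
proof -
  have "3 * a^2 + 3 * b^2 + 3 * c^2 - (a - b - c)^2 = (a + b)^2 + (a + c)^2 + (b - c)^2"
    by (simp add: power2_eq_square algebra_simps)
  then show ?thesis by (smt (verit) zero_le_power2)
qed

definition offdiag_pairs :: "nat \<Rightarrow> (nat \<times> nat) set" where
  "offdiag_pairs n = Sigma {1..n} (\<lambda>i. {1..n} - {i})"

lemma finite_offdiag_pairs [simp]: "finite (offdiag_pairs n)"
  unfolding offdiag_pairs_def by auto

lemma mem_offdiag_pairs: "p \<in> offdiag_pairs n \<longleftrightarrow> fst p \<in> {1..n} \<and> snd p \<in> {1..n} \<and> fst p \<noteq> snd p"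
  unfolding offdiag_pairs_def by (cases p) auto

lemma card_offdiag_pairs: "card (offdiag_pairs n) = n * (n - 1)"
proof -
  have "card (offdiag_pairs n) = (\<Sum>i=1..n. card ({1..n} - {i}))"
    unfolding offdiag_pairs_def by (subst card_SigmaI) auto
  also have "\<dots> = (\<Sum>i=1..n. n - 1)" by (rule sum.cong) auto
  finally show ?thesis by simp
qed

lemma sum_offdiag_pairs:
  "(\<Sum>p\<in>offdiag_pairs n. F (fst p) (snd p)) = (\<Sum>i=1..n. \<Sum>j\<in>{1..n}-{i}. F i j)"
  unfolding offdiag_pairs_def by (subst sum.Sigma) (auto simp: split_beta)

lemma sum_offdiag_pairs_eq_diff:
  "(\<Sum>p\<in>offdiag_pairs n. F (fst p) (snd p)) = (\<Sum>i=1..n. \<Sum>j=1..n. F i j) - (\<Sum>i=1..n. F i i)"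
  for F :: "nat \<Rightarrow> nat \<Rightarrow> 'b::ab_group_add"
proof -
  have "(\<Sum>j=1..n. F i j) = F i i + (\<Sum>j\<in>{1..n}-{i}. F i j)" if "i \<in> {1..n}" for i
    using that by (simp add: sum.remove)
  then show ?thesis unfolding sum_offdiag_pairs by (simp add: sum.distrib)
qed

section \<open>Exchangeable standardized columns\<close>

locale gram_model = prob_space M for M :: "'a measure" +
  fixes n N :: nat and A :: "nat \<Rightarrow> nat \<Rightarrow> 'a \<Rightarrow> real"
  assumes A_measurable: "\<And>i k. i \<in> {1..n} \<Longrightarrow> k \<in> {1..N} \<Longrightarrow> A i k \<in> borel_measurable M"
    and indep_cols: "indep_vars (\<lambda>k. PiM {1..n} (\<lambda>_. borel)) (\<lambda>k \<omega>. restrict (\<lambda>i. A i k \<omega>) {1..n}) {1..N}"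
    and indep_entries: "\<And>k. k \<in> {1..N} \<Longrightarrow> indep_vars (\<lambda>_. borel) (\<lambda>i. A i k) {1..n}"
    and identically_distributed:
      "\<And>i k. i \<in> {1..n} \<Longrightarrow> k \<in> {1..N} \<Longrightarrow> distr M borel (A i k) = distr M borel (A 1 k)"
    and col_svar_pos: "\<And>k. k \<in> {1..N} \<Longrightarrow> AE \<omega> in M. col_svar n A k \<omega> > 0"
    and two_le_n: "2 \<le> n"
begin

definition column :: "nat \<Rightarrow> 'a \<Rightarrow> nat \<Rightarrow> real" where
  "column k \<omega> = restrict (\<lambda>i. A i k \<omega>) {1..n}"

definition Z :: "nat \<Rightarrow> nat \<Rightarrow> 'a \<Rightarrow> real" where
  "Z i k \<omega> = standardize n i (column k \<omega>)"

lemma Z_eq_Zmat: "i \<in> {1..n} \<Longrightarrow> Z i k \<omega> = Zmat n A i k \<omega>"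
  unfolding Z_def Zmat_eq_standardize column_def by (rule standardize_cong) auto

lemma indep_columns: "indep_vars (\<lambda>k. PiM {1..n} (\<lambda>_. borel)) column {1..N}"
  using indep_cols unfolding column_def[abs_def] .

lemma column_measurable: "k \<in> {1..N} \<Longrightarrow> column k \<in> measurable M (PiM {1..n} (\<lambda>_. borel))"
  using indep_vars_measurable[OF indep_columns] .

lemma Z_measurable: "i \<in> {1..n} \<Longrightarrow> k \<in> {1..N} \<Longrightarrow> Z i k \<in> borel_measurable M"
  unfolding Z_def using measurable_comp[OF column_measurable standardize_measurable]
  by (simp add: comp_def)

lemma sum_Z: "(\<Sum>i=1..n. Z i k \<omega>) = 0"
  unfolding Z_def by (rule sum_standardize)

lemma sum_Z_sq_le: "(\<Sum>i=1..n. Z i k \<omega> ^ 2) \<le> real n"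
  unfolding Z_def by (rule sum_standardize_sq_le)

lemma abs_Z_mult_le: "i \<in> {1..n} \<Longrightarrow> j \<in> {1..n} \<Longrightarrow> \<bar>Z i k \<omega> * Z j k' \<omega>'\<bar> \<le> real n"
  unfolding Z_def abs_mult
  by (rule order.trans[OF mult_mono[OF abs_standardize_le abs_standardize_le]]) auto

lemma AE_sum_Z_sq: "k \<in> {1..N} \<Longrightarrow> AE \<omega> in M. (\<Sum>i=1..n. Z i k \<omega> ^ 2) = real n"
proof -
  assume k: "k \<in> {1..N}"
  have "sample_var n (column k \<omega>) = col_svar n A k \<omega>" for \<omega>
    unfolding col_svar_eq_sample_var column_def by (rule sample_var_cong) auto
  then have "AE \<omega> in M. sample_var n (column k \<omega>) > 0" using col_svar_pos[OF k] by simp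
  then show ?thesis by eventually_elim (auto simp: Z_def dest: sum_standardize_sq)
qed

lemma integrable_Z_mult:
  "i \<in> {1..n} \<Longrightarrow> j \<in> {1..n} \<Longrightarrow> k \<in> {1..N} \<Longrightarrow> integrable M (\<lambda>\<omega>. Z i k \<omega> * Z j k \<omega>)"
  by (rule integrable_const_bound[where B="real n"]) (use Z_measurable abs_Z_mult_le in auto)

lemma distr_column:
  assumes k: "k \<in> {1..N}"
  shows "distr M (PiM {1..n} (\<lambda>_. borel)) (column k) = PiM {1..n} (\<lambda>_. distr M borel (A 1 k))"
proof -
  let ?X = "\<lambda>i \<omega>. if i \<in> {1..n} then A i k \<omega> else 0"
  have nonempty: "{1..n} \<noteq> {}" using two_le_n by auto
  have rv: "random_variable borel (?X i)" for i
    using A_measurable k by (cases "i \<in> {1..n}") auto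
  have "indep_vars (\<lambda>_. borel) ?X {1..n}"
    using indep_entries[OF k] by (rule indep_vars_cong[THEN iffD1, rotated 3]) auto
  then have "distr M (PiM {1..n} (\<lambda>_. borel)) (\<lambda>\<omega>. \<lambda>i\<in>{1..n}. ?X i \<omega>)
      = PiM {1..n} (\<lambda>i. distr M borel (?X i))"
    using indep_vars_iff_distr_eq_PiM[OF nonempty rv] by simp
  moreover have "(\<lambda>\<omega>. \<lambda>i\<in>{1..n}. ?X i \<omega>) = column k"
    unfolding column_def by (auto simp: fun_eq_iff)
  moreover have "PiM {1..n} (\<lambda>i. distr M borel (?X i)) = PiM {1..n} (\<lambda>_. distr M borel (A 1 k))"
  proof (rule PiM_cong)
    fix i assume i: "i \<in> {1..n}"
    then have "?X i = A i k" by auto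
    then show "distr M borel (?X i) = distr M borel (A 1 k)" using identically_distributed[OF i k] by simp
  qed simp
  ultimately show ?thesis by simp
qed

lemma integral_column_permute:
  fixes h :: "(nat \<Rightarrow> real) \<Rightarrow> real"
  assumes k: "k \<in> {1..N}" and \<sigma>: "\<sigma> permutes {1..n}"
    and h: "h \<in> borel_measurable (PiM {1..n} (\<lambda>_. borel))"
  shows "(\<integral>\<omega>. h (column k \<omega>) \<partial>M) = (\<integral>\<omega>. h (\<lambda>j\<in>{1..n}. column k \<omega> (\<sigma> j)) \<partial>M)"
proof -
  let ?P = "PiM {1..n} (\<lambda>_. borel :: real measure)"
  let ?D = "PiM {1..n} (\<lambda>_. distr M borel (A 1 k))"
  let ?r = "\<lambda>x. \<lambda>j\<in>{1..n}. x (\<sigma> j)"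
  have sets_D: "sets ?D = sets ?P" by (rule sets_PiM_cong) auto
  have r_P: "?r \<in> measurable ?P ?P"
  proof (rule measurable_restrict)
    fix j assume "j \<in> {1..n}"
    then have "\<sigma> j \<in> {1..n}" using \<sigma> by (meson permutes_in_image)
    then show "(\<lambda>x. x (\<sigma> j)) \<in> measurable ?P borel" by measurable
  qed
  have r_D: "?r \<in> measurable ?D ?D" using r_P measurable_cong_sets[OF sets_D sets_D] by simp
  have h_D: "h \<in> borel_measurable ?D" using h measurable_cong_sets[OF sets_D refl] by simp
  have hr: "(\<lambda>x. h (?r x)) \<in> borel_measurable ?P" using measurable_comp[OF r_P h] by (simp add: comp_def)
  have "prob_space (distr M borel (A 1 k))"
    by (rule prob_space_distr) (use A_measurable k two_le_n in auto)
  moreover have "inj_on \<sigma> {1..n}" "\<sigma> \<in> {1..n} \<rightarrow> {1..n}"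
    using \<sigma> permutes_inj_on permutes_in_image[OF \<sigma>] by auto
  ultimately have reindex: "distr ?D ?D ?r = ?D"
    using distr_PiM_reindex[of "{1..n}" "\<lambda>_. distr M borel (A 1 k)"] by simp
  have "(\<integral>\<omega>. h (column k \<omega>) \<partial>M) = integral\<^sup>L (distr M ?P (column k)) h"
    by (rule integral_distr[symmetric, OF column_measurable[OF k] h])
  also have "\<dots> = integral\<^sup>L (distr ?D ?D ?r) h" unfolding distr_column[OF k] reindex ..
  also have "\<dots> = (\<integral>x. h (?r x) \<partial>distr M ?P (column k))"
    unfolding distr_column[OF k] by (rule integral_distr[OF r_D h_D])
  also have "\<dots> = (\<integral>\<omega>. h (?r (column k \<omega>)) \<partial>M)" by (rule integral_distr[OF column_measurable[OF k] hr])
  finally show ?thesis .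
qed

lemma integral_Z_mult_permute:
  assumes k: "k \<in> {1..N}" and \<sigma>: "\<sigma> permutes {1..n}" and ij: "i \<in> {1..n}" "j \<in> {1..n}"
  shows "(\<integral>\<omega>. Z i k \<omega> * Z j k \<omega> \<partial>M) = (\<integral>\<omega>. Z (\<sigma> i) k \<omega> * Z (\<sigma> j) k \<omega> \<partial>M)"
proof -
  have h: "(\<lambda>x. standardize n i x * standardize n j x) \<in> borel_measurable (PiM {1..n} (\<lambda>_. borel))"
    using standardize_measurable ij by auto
  have "standardize n c (\<lambda>j\<in>{1..n}. x (\<sigma> j)) = standardize n (\<sigma> c) x" if "c \<in> {1..n}" for c x
    using standardize_cong[of n "\<lambda>j\<in>{1..n}. x (\<sigma> j)" "\<lambda>j. x (\<sigma> j)"] that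
      standardize_permute[OF \<sigma>] by simp
  then show ?thesis unfolding Z_def using integral_column_permute[OF k \<sigma> h] ij by simp
qed

lemma integral_Z_sq_eq_first:
  assumes k: "k \<in> {1..N}" and i: "i \<in> {1..n}"
  shows "(\<integral>\<omega>. Z i k \<omega> ^ 2 \<partial>M) = (\<integral>\<omega>. Z 1 k \<omega> ^ 2 \<partial>M)"
proof -
  have 1: "1 \<in> {1..n}" using two_le_n by auto
  show ?thesis
    using integral_Z_mult_permute[OF k permutes_swap_id[OF 1 i] 1 1] by (simp add: power2_eq_square)
qed

lemma integral_Z_mult_eq_first:
  assumes k: "k \<in> {1..N}" and ij: "i \<in> {1..n}" "j \<in> {1..n}" "i \<noteq> j"
  shows "(\<integral>\<omega>. Z i k \<omega> * Z j k \<omega> \<partial>M) = (\<integral>\<omega>. Z 1 k \<omega> * Z 2 k \<omega> \<partial>M)"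
proof -
  have 12: "1 \<in> {1..n}" "2 \<in> {1..n}" using two_le_n by auto
  define j' where "j' = Transposition.transpose 1 i j"
  have j': "j' \<in> {1..n}"
    unfolding j'_def using ij 12 permutes_in_image[OF permutes_swap_id[OF 12(1) ij(1)]] by blast
  define \<sigma> where "\<sigma> = Transposition.transpose 1 i \<circ> Transposition.transpose 2 j'"
  have \<sigma>: "\<sigma> permutes {1..n}" unfolding \<sigma>_def by (intro permutes_compose permutes_swap_id 12 j' ij)
  have "j' \<noteq> 1" unfolding j'_def using ij by (auto simp: Transposition.transpose_def split: if_splits)
  then have "\<sigma> 1 = i" "\<sigma> 2 = j" unfolding \<sigma>_def j'_def by (simp_all add: transpose_def)
  then show ?thesis using integral_Z_mult_permute[OF k \<sigma> 12] by simp
qed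

lemma integral_Z_sq:
  assumes k: "k \<in> {1..N}" and i: "i \<in> {1..n}"
  shows "(\<integral>\<omega>. Z i k \<omega> ^ 2 \<partial>M) = 1"
proof -
  have int: "integrable M (\<lambda>\<omega>. Z j k \<omega> ^ 2)" if "j \<in> {1..n}" for j
    using integrable_Z_mult[OF that that k] by (simp add: power2_eq_square)
  have "real n = (\<integral>\<omega>. (\<Sum>j=1..n. Z j k \<omega> ^ 2) \<partial>M)"
    using integral_cong_AE[OF _ _ AE_sum_Z_sq[OF k]] Z_measurable k by (simp add: prob_space)
  also have "\<dots> = (\<Sum>j=1..n. \<integral>\<omega>. Z j k \<omega> ^ 2 \<partial>M)"
    by (rule Bochner_Integration.integral_sum) (use int in auto)
  also have "\<dots> = (\<Sum>j=1..n. \<integral>\<omega>. Z 1 k \<omega> ^ 2 \<partial>M)"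
    by (rule sum.cong[OF refl]) (rule integral_Z_sq_eq_first[OF k])
  finally have "(\<integral>\<omega>. Z 1 k \<omega> ^ 2 \<partial>M) = 1" using two_le_n by simp
  then show ?thesis using integral_Z_sq_eq_first[OF k i] by simp
qed

definition rho :: real where "rho = - 1 / (real n - 1)"

text \<open>Since each column sums to 0, \<open>0 = E (\<Sum>j. Z 1 k * Z j k) = 1 + (n - 1) * E (Z 1 k * Z 2 k)\<close>.\<close>

lemma integral_Z_mult:
  assumes k: "k \<in> {1..N}" and ij: "i \<in> {1..n}" "j \<in> {1..n}" "i \<noteq> j"
  shows "(\<integral>\<omega>. Z i k \<omega> * Z j k \<omega> \<partial>M) = rho"
proof -
  define \<beta> where "\<beta> = (\<integral>\<omega>. Z 1 k \<omega> * Z 2 k \<omega> \<partial>M)"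
  have 1: "1 \<in> {1..n}" using two_le_n by auto
  have "(\<Sum>j=1..n. Z 1 k \<omega> * Z j k \<omega>) = 0" for \<omega>
    using sum_Z[of k \<omega>] by (simp add: sum_distrib_left[symmetric])
  then have "0 = (\<integral>\<omega>. (\<Sum>j=1..n. Z 1 k \<omega> * Z j k \<omega>) \<partial>M)" by simp
  also have "\<dots> = (\<Sum>j=1..n. \<integral>\<omega>. Z 1 k \<omega> * Z j k \<omega> \<partial>M)"
    by (rule Bochner_Integration.integral_sum) (use integrable_Z_mult[OF 1 _ k] in auto)
  also have "\<dots> = (\<integral>\<omega>. Z 1 k \<omega> * Z 1 k \<omega> \<partial>M) + (\<Sum>j\<in>{1..n}-{1}. \<integral>\<omega>. Z 1 k \<omega> * Z j k \<omega> \<partial>M)"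
    by (rule sum.remove) (use 1 in auto)
  also have "\<dots> = 1 + (\<Sum>j\<in>{1..n}-{1}. \<beta>)"
  proof -
    have "(\<integral>\<omega>. Z 1 k \<omega> * Z j k \<omega> \<partial>M) = \<beta>" if "j \<in> {1..n}-{1}" for j
      unfolding \<beta>_def using that by (intro integral_Z_mult_eq_first[OF k 1]) auto
    then show ?thesis using integral_Z_sq[OF k 1] by (simp add: power2_eq_square)
  qed
  also have "\<dots> = 1 + (real n - 1) * \<beta>" using two_le_n by (simp add: of_nat_diff)
  finally have "\<beta> = rho" using two_le_n unfolding rho_def by (simp add: field_simps)
  then show ?thesis using integral_Z_mult_eq_first[OF k ij] \<beta>_def by simp
qed

section \<open>Decomposition of the statistic\<close>

definition centered_prod_fun :: "nat \<times> nat \<Rightarrow> (nat \<Rightarrow> real) \<Rightarrow> real" where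
  "centered_prod_fun p x =
     (if p \<in> offdiag_pairs n then standardize n (fst p) x * standardize n (snd p) x - rho else 0)"

definition centered_prod :: "nat \<Rightarrow> nat \<times> nat \<Rightarrow> 'a \<Rightarrow> real" where
  "centered_prod k p \<omega> = centered_prod_fun p (column k \<omega>)"

definition overlap :: "nat \<Rightarrow> nat \<Rightarrow> 'a \<Rightarrow> real" where
  "overlap k l \<omega> = (\<Sum>p\<in>offdiag_pairs n. centered_prod k p \<omega> * centered_prod l p \<omega>)"

definition overlap_sum :: "'a \<Rightarrow> real" where
  "overlap_sum \<omega> = (\<Sum>q\<in>offdiag_pairs N. overlap (fst q) (snd q) \<omega>)"

definition col_inner :: "nat \<Rightarrow> nat \<Rightarrow> 'a \<Rightarrow> real" where
  "col_inner k l \<omega> = (\<Sum>i=1..n. Z i k \<omega> * Z i l \<omega>)"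

definition col_sq_inner :: "nat \<Rightarrow> nat \<Rightarrow> 'a \<Rightarrow> real" where
  "col_sq_inner k l \<omega> = (\<Sum>i=1..n. Z i k \<omega> ^ 2 * Z i l \<omega> ^ 2)"

definition fourth_power_term :: "'a \<Rightarrow> real" where
  "fourth_power_term \<omega> = (\<Sum>k=1..N. \<Sum>i=1..n. Z i k \<omega> ^ 4) / (real n * real N ^ 2)"

lemma centered_prod_eq:
  "p \<in> offdiag_pairs n \<Longrightarrow> centered_prod k p \<omega> = Z (fst p) k \<omega> * Z (snd p) k \<omega> - rho"
  unfolding centered_prod_def centered_prod_fun_def Z_def by simp

lemma overlap_sym: "overlap k l \<omega> = overlap l k \<omega>"
  unfolding overlap_def by (simp add: mult.commute)

lemma card_offdiag_pairs_mult_rho_sq: "real (card (offdiag_pairs n)) * rho^2 = real n / (real n - 1)"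
proof -
  have card: "real (card (offdiag_pairs n)) = real n * (real n - 1)"
    using two_le_n by (simp add: card_offdiag_pairs of_nat_diff)
  have "x * t * (- 1 / t)^2 = x / t" if "t > 0" for x t :: real
    using that by (simp add: power2_eq_square field_simps)
  moreover have "real n - 1 > 0" using two_le_n by simp
  ultimately show ?thesis unfolding card rho_def by simp
qed

lemma sum_offdiag_Z_mult:
  assumes "(\<Sum>i=1..n. Z i k \<omega> ^ 2) = real n"
  shows "(\<Sum>p\<in>offdiag_pairs n. Z (fst p) k \<omega> * Z (snd p) k \<omega>) = - real n"
proof -
  have "(\<Sum>i=1..n. \<Sum>j=1..n. Z i k \<omega> * Z j k \<omega>) = (\<Sum>i=1..n. Z i k \<omega>) * (\<Sum>j=1..n. Z j k \<omega>)"
    by (simp add: sum_product)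
  then show ?thesis
    using sum_Z[of k \<omega>] assms unfolding sum_offdiag_pairs_eq_diff[of "\<lambda>i j. Z i k \<omega> * Z j k \<omega>"]
    by (simp add: power2_eq_square)
qed

lemma sum_offdiag_Z_mult_Z_mult:
  "(\<Sum>p\<in>offdiag_pairs n. Z (fst p) k \<omega> * Z (snd p) k \<omega> * (Z (fst p) l \<omega> * Z (snd p) l \<omega>))
     = col_inner k l \<omega> ^ 2 - col_sq_inner k l \<omega>"
proof -
  have "col_inner k l \<omega> ^ 2 = (\<Sum>i=1..n. \<Sum>j=1..n. Z i k \<omega> * Z j k \<omega> * (Z i l \<omega> * Z j l \<omega>))"
    unfolding col_inner_def power2_eq_square sum_product by (intro sum.cong refl) (simp add: algebra_simps)
  then show ?thesis
    unfolding sum_offdiag_pairs_eq_diff[of "\<lambda>i j. Z i k \<omega> * Z j k \<omega> * (Z i l \<omega> * Z j l \<omega>)"] col_sq_inner_def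
    by (simp add: power2_eq_square algebra_simps)
qed

lemma overlap_eq:
  assumes "(\<Sum>i=1..n. Z i k \<omega> ^ 2) = real n" "(\<Sum>i=1..n. Z i l \<omega> ^ 2) = real n"
  shows "overlap k l \<omega> = col_inner k l \<omega> ^ 2 - col_sq_inner k l \<omega> - real n / (real n - 1)"
proof -
  have "overlap k l \<omega>
      = (\<Sum>p\<in>offdiag_pairs n. Z (fst p) k \<omega> * Z (snd p) k \<omega> * (Z (fst p) l \<omega> * Z (snd p) l \<omega>))
        - rho * (\<Sum>p\<in>offdiag_pairs n. Z (fst p) k \<omega> * Z (snd p) k \<omega>)
        - rho * (\<Sum>p\<in>offdiag_pairs n. Z (fst p) l \<omega> * Z (snd p) l \<omega>)
        + real (card (offdiag_pairs n)) * rho^2"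
    unfolding overlap_def
    by (simp add: centered_prod_eq algebra_simps power2_eq_square sum.distrib sum_subtractf
        sum_distrib_left cong: sum.cong)
  moreover have "rho * real n = - (real n / (real n - 1))"
    unfolding rho_def by (simp add: field_simps)
  ultimately show ?thesis
    unfolding sum_offdiag_Z_mult_Z_mult sum_offdiag_Z_mult[OF assms(1)] sum_offdiag_Z_mult[OF assms(2)]
      card_offdiag_pairs_mult_rho_sq
    by (simp add: algebra_simps)
qed

lemma sum_offdiag_Gmat_sq:
  "(\<Sum>i\<in>{1..n}. \<Sum>j\<in>{1..n} - {i}. (Gmat n N A i j \<omega>)^2)
     = (\<Sum>k=1..N. \<Sum>l=1..N. col_inner k l \<omega> ^ 2 - col_sq_inner k l \<omega>) / real N ^ 2"
proof -
  have G: "Gmat n N A i j \<omega> = (\<Sum>k=1..N. Z i k \<omega> * Z j k \<omega>) / real N" if "i \<in> {1..n}" "j \<in> {1..n}" for i j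
    unfolding Gmat_def using that by (simp add: Z_eq_Zmat)
  have "(\<Sum>i\<in>{1..n}. \<Sum>j\<in>{1..n} - {i}. (Gmat n N A i j \<omega>)^2)
      = (\<Sum>p\<in>offdiag_pairs n. (\<Sum>k=1..N. Z (fst p) k \<omega> * Z (snd p) k \<omega>)^2) / real N ^ 2"
    unfolding sum_offdiag_pairs[of "\<lambda>i j. (Gmat n N A i j \<omega>)^2", symmetric] sum_divide_distrib
    by (intro sum.cong refl) (auto simp: G mem_offdiag_pairs power_divide)
  also have "(\<Sum>p\<in>offdiag_pairs n. (\<Sum>k=1..N. Z (fst p) k \<omega> * Z (snd p) k \<omega>)^2)
      = (\<Sum>k=1..N. \<Sum>l=1..N. \<Sum>p\<in>offdiag_pairs n.
           Z (fst p) k \<omega> * Z (snd p) k \<omega> * (Z (fst p) l \<omega> * Z (snd p) l \<omega>))"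
    unfolding power2_eq_square sum_product by (subst sum.swap) (simp add: sum.swap[of _ "offdiag_pairs n"])
  finally show ?thesis unfolding sum_offdiag_Z_mult_Z_mult .
qed

lemma offdiag_Gmat_sq_decomp:
  assumes N: "N \<ge> 1" and sq: "\<forall>k\<in>{1..N}. (\<Sum>i=1..n. Z i k \<omega> ^ 2) = real n"
  shows "(\<Sum>i\<in>{1..n}. \<Sum>j\<in>{1..n} - {i}. (Gmat n N A i j \<omega>)^2) / real n
    = real n / real N - fourth_power_term \<omega> + overlap_sum \<omega> / (real n * real N ^ 2)
      + real (card (offdiag_pairs N)) / (real N ^ 2 * (real n - 1))"
proof -
  let ?F = "\<lambda>k l. col_inner k l \<omega> ^ 2 - col_sq_inner k l \<omega>"
  have diag: "?F k k = real n ^ 2 - (\<Sum>i=1..n. Z i k \<omega> ^ 4)" if "k \<in> {1..N}" for k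
  proof -
    have "col_inner k k \<omega> = real n" unfolding col_inner_def using sq that by (simp add: power2_eq_square)
    moreover have "col_sq_inner k k \<omega> = (\<Sum>i=1..n. Z i k \<omega> ^ 4)"
      unfolding col_sq_inner_def by (simp add: power2_eq_square power4_eq_xxxx mult.assoc)
    ultimately show ?thesis by simp
  qed
  have offdiag: "?F (fst q) (snd q) = overlap (fst q) (snd q) \<omega> + real n / (real n - 1)"
    if "q \<in> offdiag_pairs N" for q
    using that sq overlap_eq by (auto simp: mem_offdiag_pairs)
  have "(\<Sum>k=1..N. \<Sum>l=1..N. ?F k l) = (\<Sum>k=1..N. ?F k k) + (\<Sum>q\<in>offdiag_pairs N. ?F (fst q) (snd q))"
    by (simp add: sum_offdiag_pairs_eq_diff[of ?F N])
  also have "\<dots> = (\<Sum>k=1..N. real n ^ 2 - (\<Sum>i=1..n. Z i k \<omega> ^ 4))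
      + (\<Sum>q\<in>offdiag_pairs N. overlap (fst q) (snd q) \<omega> + real n / (real n - 1))"
    by (intro arg_cong2[where f="(+)"] sum.cong refl diag offdiag) auto
  also have "\<dots> = real N * real n ^ 2 - (\<Sum>k=1..N. \<Sum>i=1..n. Z i k \<omega> ^ 4)
      + (overlap_sum \<omega> + real (card (offdiag_pairs N)) * (real n / (real n - 1)))"
    unfolding overlap_sum_def by (simp add: sum.distrib sum_subtractf)
  finally have F_sum: "(\<Sum>k=1..N. \<Sum>l=1..N. ?F k l) = \<dots>" .
  show ?thesis
    unfolding sum_offdiag_Gmat_sq F_sum fourth_power_term_def
    using N two_le_n by (simp add: field_simps power2_eq_square)
qed

section \<open>Second moments of the overlaps\<close>

lemma centered_prod_fun_measurable: "centered_prod_fun p \<in> borel_measurable (PiM {1..n} (\<lambda>_. borel))"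
  unfolding centered_prod_fun_def[abs_def] using standardize_measurable
  by (cases "p \<in> offdiag_pairs n") (auto simp: mem_offdiag_pairs)

lemma abs_centered_prod_fun_le: "\<bar>centered_prod_fun p x\<bar> \<le> real n + 1"
proof -
  have "\<bar>rho\<bar> \<le> 1" using two_le_n unfolding rho_def by (simp add: field_simps)
  then show ?thesis
    unfolding centered_prod_fun_def using abs_standardize_mult_le[of "fst p" n "snd p" x]
    by (auto simp: mem_offdiag_pairs)
qed

lemma centered_prod_measurable: "k \<in> {1..N} \<Longrightarrow> centered_prod k p \<in> borel_measurable M"
  unfolding centered_prod_def
  using measurable_comp[OF column_measurable centered_prod_fun_measurable] by (simp add: comp_def)

lemma integral_centered_prod:
  assumes k: "k \<in> {1..N}" and p: "p \<in> offdiag_pairs n"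
  shows "(\<integral>\<omega>. centered_prod k p \<omega> \<partial>M) = 0"
proof -
  have ij: "fst p \<in> {1..n}" "snd p \<in> {1..n}" "fst p \<noteq> snd p" using p by (auto simp: mem_offdiag_pairs)
  then show ?thesis
    unfolding centered_prod_eq[OF p] using integrable_Z_mult[OF ij(1,2) k] integral_Z_mult[OF k ij]
    by (simp add: prob_space)
qed

lemma integral_mult_distinct_columns:
  fixes f g :: "(nat \<Rightarrow> real) \<Rightarrow> real"
  assumes kl: "k \<in> {1..N}" "l \<in> {1..N}" "k \<noteq> l"
    and f: "f \<in> borel_measurable (PiM {1..n} (\<lambda>_. borel))" "\<And>x. \<bar>f x\<bar> \<le> B"
    and g: "g \<in> borel_measurable (PiM {1..n} (\<lambda>_. borel))" "\<And>x. \<bar>g x\<bar> \<le> B"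
  shows "(\<integral>\<omega>. f (column k \<omega>) * g (column l \<omega>) \<partial>M)
    = (\<integral>\<omega>. f (column k \<omega>) \<partial>M) * (\<integral>\<omega>. g (column l \<omega>) \<partial>M)"
proof -
  define h where "h c = (if c = k then f else g)" for c
  have h_meas: "h c \<in> borel_measurable (PiM {1..n} (\<lambda>_. borel))" for c
    using f g by (simp add: h_def)
  have h_int: "integrable M (\<lambda>\<omega>. h c (column c \<omega>))" if c: "c \<in> {k,l}" for c
  proof (rule integrable_const_bound[where B=B])
    show "(\<lambda>\<omega>. h c (column c \<omega>)) \<in> borel_measurable M"
      using c kl measurable_comp[OF column_measurable h_meas] by (auto simp: comp_def)
    show "AE \<omega> in M. norm (h c (column c \<omega>)) \<le> B" using f(2) g(2) by (simp add: h_def)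
  qed
  have "(\<integral>\<omega>. (\<Prod>c\<in>{k,l}. h c (column c \<omega>)) \<partial>M) = (\<Prod>c\<in>{k,l}. \<integral>\<omega>. h c (column c \<omega>) \<partial>M)"
    by (rule indep_vars_integral_prod(1)[OF indep_columns]) (use kl h_meas h_int in auto)
  then show ?thesis using kl(3) by (simp add: h_def)
qed

lemma integral_col_inner_sq:
  assumes kl: "k \<in> {1..N}" "l \<in> {1..N}" "k \<noteq> l"
  shows "(\<integral>\<omega>. col_inner k l \<omega> ^ 2 \<partial>M) = real n + real n / (real n - 1)"
proof -
  let ?E = "\<lambda>i j k. \<integral>\<omega>. Z i k \<omega> * Z j k \<omega> \<partial>M"
  have factor: "(\<integral>\<omega>. Z i k \<omega> * Z j k \<omega> * (Z i l \<omega> * Z j l \<omega>) \<partial>M) = ?E i j k * ?E i j l"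
    and int: "integrable M (\<lambda>\<omega>. Z i k \<omega> * Z j k \<omega> * (Z i l \<omega> * Z j l \<omega>))"
    if "i \<in> {1..n}" "j \<in> {1..n}" for i j
  proof -
    let ?f = "\<lambda>x. standardize n i x * standardize n j x"
    have f_meas: "?f \<in> borel_measurable (PiM {1..n} (\<lambda>_. borel))"
      using that by (intro borel_measurable_times standardize_measurable)
    have f_bound: "\<bar>?f x\<bar> \<le> real n" for x using abs_standardize_mult_le[OF that] .
    show "(\<integral>\<omega>. Z i k \<omega> * Z j k \<omega> * (Z i l \<omega> * Z j l \<omega>) \<partial>M) = ?E i j k * ?E i j l"
      unfolding Z_def by (rule integral_mult_distinct_columns[OF kl f_meas f_bound f_meas f_bound])
    have "\<bar>Z i k \<omega> * Z j k \<omega> * (Z i l \<omega> * Z j l \<omega>)\<bar> \<le> real n * real n" for \<omega>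
      unfolding abs_mult[of "Z i k \<omega> * Z j k \<omega>"] using that
      by (intro mult_mono abs_Z_mult_le) auto
    then show "integrable M (\<lambda>\<omega>. Z i k \<omega> * Z j k \<omega> * (Z i l \<omega> * Z j l \<omega>))"
      using Z_measurable kl that by (intro integrable_const_bound[where B="real n * real n"]) auto
  qed
  have "col_inner k l \<omega> ^ 2 = (\<Sum>i=1..n. \<Sum>j=1..n. Z i k \<omega> * Z j k \<omega> * (Z i l \<omega> * Z j l \<omega>))" for \<omega>
    unfolding col_inner_def power2_eq_square sum_product by (intro sum.cong refl) (simp add: algebra_simps)
  then have "(\<integral>\<omega>. col_inner k l \<omega> ^ 2 \<partial>M)
      = (\<integral>\<omega>. (\<Sum>i=1..n. \<Sum>j=1..n. Z i k \<omega> * Z j k \<omega> * (Z i l \<omega> * Z j l \<omega>)) \<partial>M)"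
    by simp
  also have "\<dots> = (\<Sum>i=1..n. \<Sum>j=1..n. \<integral>\<omega>. Z i k \<omega> * Z j k \<omega> * (Z i l \<omega> * Z j l \<omega>) \<partial>M)"
    by (rule integral_double_sum(1)) (rule int)
  also have "\<dots> = (\<Sum>i=1..n. \<Sum>j=1..n. ?E i j k * ?E i j l)"
    by (intro sum.cong refl factor) auto
  also have "\<dots> = (\<Sum>p\<in>offdiag_pairs n. ?E (fst p) (snd p) k * ?E (fst p) (snd p) l)
      + (\<Sum>i=1..n. ?E i i k * ?E i i l)"
    unfolding sum_offdiag_pairs_eq_diff[of "\<lambda>i j. ?E i j k * ?E i j l"] by simp
  also have "\<dots> = (\<Sum>p\<in>offdiag_pairs n. rho^2) + (\<Sum>i=1..n. 1)"
    using integral_Z_mult[OF kl(1)] integral_Z_mult[OF kl(2)] integral_Z_sq kl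
    by (intro arg_cong2[where f="(+)"] sum.cong) (auto simp: mem_offdiag_pairs power2_eq_square)
  finally show ?thesis using card_offdiag_pairs_mult_rho_sq by simp
qed

lemma integral_col_sq_inner:
  assumes kl: "k \<in> {1..N}" "l \<in> {1..N}" "k \<noteq> l"
  shows "(\<integral>\<omega>. col_sq_inner k l \<omega> \<partial>M) = real n"
proof -
  have moment: "(\<integral>\<omega>. Z i k \<omega> ^ 2 * Z i l \<omega> ^ 2 \<partial>M) = 1"
    and int: "integrable M (\<lambda>\<omega>. Z i k \<omega> ^ 2 * Z i l \<omega> ^ 2)" if i: "i \<in> {1..n}" for i
  proof -
    have f_meas: "(\<lambda>x. standardize n i x ^ 2) \<in> borel_measurable (PiM {1..n} (\<lambda>_. borel))"
      using i by (intro borel_measurable_power standardize_measurable)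
    have f_bound: "\<bar>standardize n i x ^ 2\<bar> \<le> real n" for x using standardize_sq_le[OF i] by simp
    have "(\<integral>\<omega>. Z i k \<omega> ^ 2 * Z i l \<omega> ^ 2 \<partial>M) = (\<integral>\<omega>. Z i k \<omega> ^ 2 \<partial>M) * (\<integral>\<omega>. Z i l \<omega> ^ 2 \<partial>M)"
      unfolding Z_def by (rule integral_mult_distinct_columns[OF kl f_meas f_bound f_meas f_bound])
    then show "(\<integral>\<omega>. Z i k \<omega> ^ 2 * Z i l \<omega> ^ 2 \<partial>M) = 1" using integral_Z_sq kl i by simp
    have "\<bar>Z i k \<omega> ^ 2 * Z i l \<omega> ^ 2\<bar> \<le> real n * real n" for \<omega>
      using abs_Z_mult_le[OF i i, of k \<omega> k \<omega>] abs_Z_mult_le[OF i i, of l \<omega> l \<omega>]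
      by (simp add: power2_eq_square abs_mult mult_mono)
    then show "integrable M (\<lambda>\<omega>. Z i k \<omega> ^ 2 * Z i l \<omega> ^ 2)"
      using Z_measurable kl i by (intro integrable_const_bound[where B="real n * real n"]) auto
  qed
  have "(\<integral>\<omega>. col_sq_inner k l \<omega> \<partial>M) = (\<Sum>i=1..n. \<integral>\<omega>. Z i k \<omega> ^ 2 * Z i l \<omega> ^ 2 \<partial>M)"
    unfolding col_sq_inner_def by (rule Bochner_Integration.integral_sum) (use int in auto)
  then show ?thesis using moment by simp
qed

lemma col_inner_sq_le: "col_inner k l \<omega> ^ 2 \<le> real n * real n"
proof -
  have "col_inner k l \<omega> ^ 2 \<le> (\<Sum>i=1..n. Z i k \<omega> ^ 2) * (\<Sum>i=1..n. Z i l \<omega> ^ 2)"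
    unfolding col_inner_def by (rule Cauchy_Schwarz_ineq_sum)
  also have "\<dots> \<le> real n * real n" using sum_Z_sq_le by (intro mult_mono) (auto intro: sum_nonneg)
  finally show ?thesis .
qed

lemma col_sq_inner_nonneg: "0 \<le> col_sq_inner k l \<omega>"
  unfolding col_sq_inner_def by (intro sum_nonneg) auto

lemma col_sq_inner_le: "col_sq_inner k l \<omega> \<le> real n * real n"
proof -
  have "col_sq_inner k l \<omega> \<le> (\<Sum>i=1..n. Z i k \<omega> ^ 2) * (\<Sum>i=1..n. Z i l \<omega> ^ 2)"
    unfolding col_sq_inner_def by (rule sum_mult_le_sum_mult_sum) auto
  also have "\<dots> \<le> real n * real n" using sum_Z_sq_le by (intro mult_mono) (auto intro: sum_nonneg)
  finally show ?thesis .
qed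

lemma overlap_measurable: "k \<in> {1..N} \<Longrightarrow> l \<in> {1..N} \<Longrightarrow> overlap k l \<in> borel_measurable M"
  unfolding overlap_def[abs_def] using centered_prod_measurable by (intro borel_measurable_sum) auto

lemma abs_overlap_le: "\<bar>overlap k l \<omega>\<bar> \<le> real (card (offdiag_pairs n)) * (real n + 1)^2"
  unfolding overlap_def power2_eq_square centered_prod_def
  by (rule order.trans[OF sum_abs sum_bounded_above])
     (auto simp: abs_mult intro: mult_mono abs_centered_prod_fun_le)

lemma integrable_overlap_mult:
  "k \<in> {1..N} \<Longrightarrow> l \<in> {1..N} \<Longrightarrow> k' \<in> {1..N} \<Longrightarrow> l' \<in> {1..N} \<Longrightarrow>
   integrable M (\<lambda>\<omega>. overlap k l \<omega> * overlap k' l' \<omega>)"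
proof (rule integrable_const_bound[where B="(real (card (offdiag_pairs n)) * (real n + 1)^2)^2"])
  assume "k \<in> {1..N}" "l \<in> {1..N}" "k' \<in> {1..N}" "l' \<in> {1..N}"
  then show "(\<lambda>\<omega>. overlap k l \<omega> * overlap k' l' \<omega>) \<in> borel_measurable M"
    using overlap_measurable by auto
  show "AE \<omega> in M. norm (overlap k l \<omega> * overlap k' l' \<omega>)
      \<le> (real (card (offdiag_pairs n)) * (real n + 1)^2)^2"
    unfolding real_norm_def abs_mult power2_eq_square[of "_ * _"]
    by (intro AE_I2 mult_mono abs_overlap_le) auto
qed

lemma overlap_sq_le:
  assumes "(\<Sum>i=1..n. Z i k \<omega> ^ 2) = real n" "(\<Sum>i=1..n. Z i l \<omega> ^ 2) = real n"
  shows "overlap k l \<omega> ^ 2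
    \<le> 3 * real n ^ 2 * col_inner k l \<omega> ^ 2 + 3 * real n ^ 2 * col_sq_inner k l \<omega> + 3 * (real n / (real n - 1))^2"
proof -
  let ?c = "col_inner k l \<omega> ^ 2" and ?d = "col_sq_inner k l \<omega>"
  have "overlap k l \<omega> ^ 2 \<le> 3 * ?c^2 + 3 * ?d^2 + 3 * (real n / (real n - 1))^2"
    unfolding overlap_eq[OF assms] by (rule square_diff3_le)
  also have "?c^2 \<le> real n ^ 2 * ?c"
    unfolding power2_eq_square[of ?c] using col_inner_sq_le
    by (intro mult_right_mono) (auto simp: power2_eq_square)
  also have "?d^2 \<le> real n ^ 2 * ?d"
    unfolding power2_eq_square[of ?d] using col_sq_inner_le col_sq_inner_nonneg
    by (intro mult_right_mono) (auto simp: power2_eq_square)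
  finally show ?thesis by (simp add: algebra_simps)
qed

lemma integrable_col_inner_sq: "k \<in> {1..N} \<Longrightarrow> l \<in> {1..N} \<Longrightarrow> integrable M (\<lambda>\<omega>. col_inner k l \<omega> ^ 2)"
  unfolding col_inner_def using Z_measurable col_inner_sq_le[unfolded col_inner_def]
  by (intro integrable_const_bound[where B="real n * real n"]) auto

lemma integrable_col_sq_inner: "k \<in> {1..N} \<Longrightarrow> l \<in> {1..N} \<Longrightarrow> integrable M (col_sq_inner k l)"
  unfolding col_sq_inner_def[abs_def]
  using Z_measurable col_sq_inner_le[unfolded col_sq_inner_def] col_sq_inner_nonneg[unfolded col_sq_inner_def]
  by (intro integrable_const_bound[where B="real n * real n"]) auto

lemma integral_overlap_sq_le:
  assumes kl: "k \<in> {1..N}" "l \<in> {1..N}" "k \<noteq> l"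
  shows "(\<integral>\<omega>. overlap k l \<omega> ^ 2 \<partial>M) \<le> 12 * real n ^ 3"
proof -
  define q where "q = real n / (real n - 1)"
  let ?B = "\<lambda>\<omega>. 3 * real n ^ 2 * col_inner k l \<omega> ^ 2 + 3 * real n ^ 2 * col_sq_inner k l \<omega> + 3 * q^2"
  have n: "2 \<le> real n" using two_le_n by simp
  have q: "0 \<le> q" "q \<le> 2" using n unfolding q_def by (auto simp: field_simps)
  have "AE \<omega> in M. overlap k l \<omega> ^ 2 \<le> ?B \<omega>"
    using AE_sum_Z_sq[OF kl(1)] AE_sum_Z_sq[OF kl(2)]
    by eventually_elim (unfold q_def, rule overlap_sq_le)
  then have "(\<integral>\<omega>. overlap k l \<omega> ^ 2 \<partial>M) \<le> (\<integral>\<omega>. ?B \<omega> \<partial>M)"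
    using integrable_overlap_mult[OF kl(1,2,1,2)] integrable_col_inner_sq[OF kl(1,2)]
      integrable_col_sq_inner[OF kl(1,2)]
    by (intro integral_mono_AE) (auto simp: power2_eq_square)
  also have "(\<integral>\<omega>. ?B \<omega> \<partial>M) = 3 * real n ^ 2 * (real n + q) + 3 * real n ^ 2 * real n + 3 * q^2"
    using integrable_col_inner_sq[OF kl(1,2)] integrable_col_sq_inner[OF kl(1,2)]
      integral_col_inner_sq[OF kl, folded q_def] integral_col_sq_inner[OF kl]
    by (simp add: prob_space)
  also have "\<dots> = 6 * real n ^ 3 + 3 * (q * real n ^ 2) + 3 * q^2"
    by (simp add: algebra_simps power2_eq_square power3_eq_cube)
  also have "\<dots> \<le> 12 * real n ^ 3"
  proof -
    have "q * real n ^ 2 \<le> 2 * real n ^ 2" using q by (intro mult_right_mono) auto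
    moreover have "2 * real n ^ 2 \<le> real n ^ 3"
      using n by (simp add: power2_eq_square power3_eq_cube mult_right_mono)
    moreover have "q^2 \<le> 4" using q power_mono[of q 2 2] by simp
    moreover have "8 \<le> real n ^ 3" using power_mono[OF n, of 3] by simp
    ultimately show ?thesis by linarith
  qed
  finally show ?thesis .
qed

text \<open>Overlaps of different unordered column pairs are orthogonal: in each product of four
  centered factors some column occurs only once, and its factor has mean zero.\<close>

lemma integral_overlap_mult_eq_0:
  assumes kl: "k \<in> {1..N}" "l \<in> {1..N}" "k \<noteq> l" and kl': "k' \<in> {1..N}" "l' \<in> {1..N}" "k' \<noteq> l'"
    and ne: "(k', l') \<noteq> (k, l)" "(k', l') \<noteq> (l, k)"
  shows "(\<integral>\<omega>. overlap k l \<omega> * overlap k' l' \<omega> \<partial>M) = 0"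
proof -
  define blk :: "nat \<Rightarrow> nat" where "blk t = [k, l, k', l'] ! t" for t
  let ?f = "\<lambda>p p' \<omega>. centered_prod k p \<omega> * centered_prod l p \<omega> * (centered_prod k' p' \<omega> * centered_prod l' p' \<omega>)"
  have summand: "(\<integral>\<omega>. ?f p p' \<omega> \<partial>M) = 0" if p: "p \<in> offdiag_pairs n" for p p'
  proof -
    define lbl :: "nat \<Rightarrow> nat \<times> nat" where "lbl t = [p, p, p', p'] ! t" for t
    define t0 :: nat where "t0 = (if k \<notin> {k', l'} then 0 else 1)"
    have "(\<integral>\<omega>. (\<Prod>t\<in>{0,1,2,3::nat}. (\<lambda>_. centered_prod_fun) (blk t) (lbl t) (column (blk t) \<omega>)) \<partial>M) = 0"
    proof (rule indep_vars_integral_prod_eq_0[OF indep_columns, where B="real n + 1" and t_alone=t0])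
      show "blk ` {0,1,2,3} \<subseteq> {1..N}" using kl kl' by (auto simp: blk_def)
      show "centered_prod_fun q \<in> borel_measurable (PiM {1..n} (\<lambda>_. borel))" for q
        by (rule centered_prod_fun_measurable)
      show "t = t0" if "t \<in> {0,1,2,3}" "blk t = blk t0" for t
        using that kl kl' ne by (auto simp: t0_def blk_def split: if_splits)
      show "(\<integral>\<omega>. centered_prod_fun (lbl t0) (column (blk t0) \<omega>) \<partial>M) = 0"
        using integral_centered_prod[OF _ p, of k] integral_centered_prod[OF _ p, of l] kl
        by (simp add: t0_def lbl_def blk_def centered_prod_def)
    qed (auto simp: t0_def abs_centered_prod_fun_le)
    then show ?thesis by (simp add: blk_def lbl_def centered_prod_def mult.assoc)
  qed
  have int: "integrable M (?f p p')" for p p'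
  proof (rule integrable_const_bound[where B="((real n + 1) * (real n + 1)) * ((real n + 1) * (real n + 1))"])
    show "?f p p' \<in> borel_measurable M" using centered_prod_measurable kl kl' by auto
    have "\<bar>centered_prod c q \<omega>\<bar> \<le> real n + 1" for c q \<omega>
      unfolding centered_prod_def by (rule abs_centered_prod_fun_le)
    then show "AE \<omega> in M. norm (?f p p' \<omega>) \<le> ((real n + 1) * (real n + 1)) * ((real n + 1) * (real n + 1))"
      unfolding real_norm_def abs_mult by (intro AE_I2 mult_mono) auto
  qed
  have "(\<lambda>\<omega>. overlap k l \<omega> * overlap k' l' \<omega>) = (\<lambda>\<omega>. \<Sum>p\<in>offdiag_pairs n. \<Sum>p'\<in>offdiag_pairs n. ?f p p' \<omega>)"
    unfolding overlap_def by (simp add: sum_product)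
  then have "(\<integral>\<omega>. overlap k l \<omega> * overlap k' l' \<omega> \<partial>M)
      = (\<integral>\<omega>. (\<Sum>p\<in>offdiag_pairs n. \<Sum>p'\<in>offdiag_pairs n. ?f p p' \<omega>) \<partial>M)"
    by simp
  also have "\<dots> = (\<Sum>p\<in>offdiag_pairs n. \<Sum>p'\<in>offdiag_pairs n. \<integral>\<omega>. ?f p p' \<omega> \<partial>M)"
    by (rule integral_double_sum(1)[OF int])
  finally show ?thesis using summand by simp
qed

lemma integral_overlap_sum_sq_le: "(\<integral>\<omega>. overlap_sum \<omega> ^ 2 \<partial>M) \<le> 24 * real N ^ 2 * real n ^ 3"
proof -
  let ?E = "\<lambda>q q'. \<integral>\<omega>. overlap (fst q) (snd q) \<omega> * overlap (fst q') (snd q') \<omega> \<partial>M"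
  have "(\<lambda>\<omega>. overlap_sum \<omega> ^ 2)
      = (\<lambda>\<omega>. \<Sum>q\<in>offdiag_pairs N. \<Sum>q'\<in>offdiag_pairs N. overlap (fst q) (snd q) \<omega> * overlap (fst q') (snd q') \<omega>)"
    unfolding overlap_sum_def by (simp add: power2_eq_square sum_product)
  then have "(\<integral>\<omega>. overlap_sum \<omega> ^ 2 \<partial>M) = (\<integral>\<omega>. (\<Sum>q\<in>offdiag_pairs N. \<Sum>q'\<in>offdiag_pairs N.
      overlap (fst q) (snd q) \<omega> * overlap (fst q') (snd q') \<omega>) \<partial>M)"
    by simp
  also have "\<dots> = (\<Sum>q\<in>offdiag_pairs N. \<Sum>q'\<in>offdiag_pairs N. ?E q q')"
    by (rule integral_double_sum(1), rule integrable_overlap_mult) (auto simp: mem_offdiag_pairs)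
  also have "\<dots> \<le> (\<Sum>q\<in>offdiag_pairs N. 24 * real n ^ 3)"
  proof (rule sum_mono)
    fix q assume q: "q \<in> offdiag_pairs N"
    obtain k l where q_eq: "q = (k, l)" by (cases q)
    have kl: "k \<in> {1..N}" "l \<in> {1..N}" "k \<noteq> l" using q q_eq by (auto simp: mem_offdiag_pairs)
    have sub: "{q, (l, k)} \<subseteq> offdiag_pairs N" using q_eq kl by (auto simp: mem_offdiag_pairs)
    have "(\<Sum>q'\<in>offdiag_pairs N. ?E q q') = (\<Sum>q'\<in>offdiag_pairs N - {q, (l,k)}. ?E q q') + (\<Sum>q'\<in>{q, (l,k)}. ?E q q')"
      by (rule sum.subset_diff[OF sub finite_offdiag_pairs])
    also have "(\<Sum>q'\<in>offdiag_pairs N - {q, (l,k)}. ?E q q') = 0"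
    proof (rule sum.neutral, rule ballI)
      fix q' assume q': "q' \<in> offdiag_pairs N - {q, (l,k)}"
      then show "?E q q' = 0" unfolding q_eq
        by (cases q') (auto simp: mem_offdiag_pairs intro!: integral_overlap_mult_eq_0 kl)
    qed
    also have "(\<Sum>q'\<in>{q, (l,k)}. ?E q q') = 2 * (\<integral>\<omega>. overlap k l \<omega> ^ 2 \<partial>M)"
      using q_eq kl overlap_sym[of l k] by (simp add: power2_eq_square)
    also have "\<dots> \<le> 24 * real n ^ 3" using integral_overlap_sq_le[OF kl] by simp
    finally show "(\<Sum>q'\<in>offdiag_pairs N. ?E q q') \<le> 24 * real n ^ 3" by simp
  qed
  also have "\<dots> \<le> 24 * real N ^ 2 * real n ^ 3"
  proof -
    have "card (offdiag_pairs N) \<le> N * N" unfolding card_offdiag_pairs by simp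
    then have "real (card (offdiag_pairs N)) \<le> real N ^ 2"
      unfolding power2_eq_square by (metis of_nat_le_iff of_nat_mult)
    then show ?thesis by (simp add: mult_right_mono)
  qed
  finally show ?thesis .
qed

lemma fourth_power_term_nonneg: "fourth_power_term \<omega> \<ge> 0"
  unfolding fourth_power_term_def by (intro divide_nonneg_nonneg sum_nonneg) auto

lemma large_deviation_imp_large_terms:
  assumes N: "N \<ge> 1" and close: "\<bar>real n / real N - a\<bar> + 1 / (real n - 1) \<le> e / 3"
    and sq: "\<forall>k\<in>{1..N}. (\<Sum>i=1..n. Z i k \<omega> ^ 2) = real n"
    and dev: "\<bar>(\<Sum>i\<in>{1..n}. \<Sum>j\<in>{1..n} - {i}. (Gmat n N A i j \<omega>)^2) / real n - a\<bar> > e"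
  shows "e / 3 \<le> fourth_power_term \<omega> \<or> (e / 3 * (real n * real N ^ 2))^2 \<le> overlap_sum \<omega> ^ 2"
proof (rule ccontr)
  let ?c = "e / 3 * (real n * real N ^ 2)"
  let ?r = "real (card (offdiag_pairs N)) / (real N ^ 2 * (real n - 1))"
  assume "\<not> ?thesis"
  then have T: "fourth_power_term \<omega> < e / 3" and U: "overlap_sum \<omega> ^ 2 < ?c^2" by auto
  have nN: "real n * real N ^ 2 > 0" using N two_le_n by simp
  have "1 / (real n - 1) > 0" using two_le_n by simp
  then have "e > 0" using close abs_ge_zero[of "real n / real N - a"] by linarith
  then have c: "0 \<le> ?c" using nN by simp
  have "\<bar>overlap_sum \<omega>\<bar>^2 < ?c^2" using U by simp
  then have "\<bar>overlap_sum \<omega>\<bar> < ?c" using c by (rule power2_less_imp_less)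
  then have "\<bar>overlap_sum \<omega>\<bar> / (real n * real N ^ 2) < ?c / (real n * real N ^ 2)"
    using nN by (rule divide_strict_right_mono)
  also have "?c / (real n * real N ^ 2) = e / 3"
    using N two_le_n by (intro nonzero_mult_div_cancel_right) simp
  finally have U': "\<bar>overlap_sum \<omega> / (real n * real N ^ 2)\<bar> < e / 3"
    using nN by (simp add: abs_divide)
  have "card (offdiag_pairs N) \<le> N * N" unfolding card_offdiag_pairs by simp
  then have "real (card (offdiag_pairs N)) \<le> real N ^ 2"
    unfolding power2_eq_square by (metis of_nat_le_iff of_nat_mult)
  then have "real (card (offdiag_pairs N)) / real N ^ 2 \<le> 1" using N by simp
  then have r: "0 \<le> ?r" "?r \<le> 1 / (real n - 1)"
    using two_le_n by (auto simp: divide_right_mono simp flip: divide_divide_eq_left)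
  have "\<bar>(\<Sum>i\<in>{1..n}. \<Sum>j\<in>{1..n} - {i}. (Gmat n N A i j \<omega>)^2) / real n - a\<bar>
      = \<bar>(real n / real N - a) - fourth_power_term \<omega> + overlap_sum \<omega> / (real n * real N ^ 2) + ?r\<bar>"
    unfolding offdiag_Gmat_sq_decomp[OF N sq] by simp
  also have "\<dots> \<le> \<bar>real n / real N - a\<bar> + fourth_power_term \<omega> + \<bar>overlap_sum \<omega> / (real n * real N ^ 2)\<bar> + ?r"
    using abs_triangle_ineq4 abs_triangle_ineq fourth_power_term_nonneg[of \<omega>] r(1)
    by (smt (verit))
  also have "\<dots> < e" using close T U' r(2) by linarith
  finally show False using dev by simp
qed

end

section \<open>Fourth moments and the deviation bound\<close>

locale gram_model_moments = gram_model +
  fixes M4 \<delta> :: real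
  assumes \<delta>_pos: "\<delta> > 0"
    and col_sig2_ge: "\<And>k. k \<in> {1..N} \<Longrightarrow> \<delta> \<le> col_sig2 M A k"
    and integrable_pow4: "\<And>i k. i \<in> {1..n} \<Longrightarrow> k \<in> {1..N} \<Longrightarrow>
      integrable M (\<lambda>\<omega>. (A i k \<omega> - col_mu M A k)^4)"
    and integral_pow4_le: "\<And>i k. i \<in> {1..n} \<Longrightarrow> k \<in> {1..N} \<Longrightarrow>
      (\<integral>\<omega>. (A i k \<omega> - col_mu M A k)^4 \<partial>M) \<le> M4"
begin

lemma integral_entry_eq_first:
  assumes i: "i \<in> {1..n}" and k: "k \<in> {1..N}" and f: "f \<in> borel_measurable (borel :: real measure)"
  shows "(\<integral>\<omega>. f (A i k \<omega>) \<partial>M) = (\<integral>\<omega>. (f (A 1 k \<omega>) :: real) \<partial>M)"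
proof -
  have 1: "1 \<in> {1..n}" using two_le_n by auto
  have "(\<integral>\<omega>. f (A i k \<omega>) \<partial>M) = integral\<^sup>L (distr M borel (A i k)) f"
    by (rule integral_distr[symmetric]) (use A_measurable i k f in auto)
  also have "\<dots> = integral\<^sup>L (distr M borel (A 1 k)) f" using identically_distributed[OF i k] by simp
  also have "\<dots> = (\<integral>\<omega>. f (A 1 k \<omega>) \<partial>M)"
    by (rule integral_distr) (use A_measurable 1 k f in auto)
  finally show ?thesis .
qed

context
  fixes k assumes k: "k \<in> {1..N}"
begin

definition "mu = col_mu M A k"
definition "sigma2 = col_sig2 M A k"

definition Y :: "nat \<Rightarrow> 'a \<Rightarrow> real" where "Y i \<omega> = A i k \<omega> - mu"
definition X :: "nat \<Rightarrow> 'a \<Rightarrow> real" where "X i \<omega> = Y i \<omega> ^ 2 - sigma2"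

lemma sigma2_ge: "\<delta> \<le> sigma2" and sigma2_pos: "sigma2 > 0"
  using col_sig2_ge[OF k] \<delta>_pos unfolding sigma2_def by auto

lemma Y_measurable: "i \<in> {1..n} \<Longrightarrow> Y i \<in> borel_measurable M"
  unfolding Y_def[abs_def] using A_measurable k by auto

lemma integrable_Y_pow4: "i \<in> {1..n} \<Longrightarrow> integrable M (\<lambda>\<omega>. Y i \<omega> ^ 4)"
  unfolding Y_def mu_def using integrable_pow4 k by auto

lemma integrable_Y: "i \<in> {1..n} \<Longrightarrow> integrable M (Y i)"
  and integrable_Y_sq: "i \<in> {1..n} \<Longrightarrow> integrable M (\<lambda>\<omega>. Y i \<omega> ^ 2)"
proof -
  assume i: "i \<in> {1..n}"
  have dom: "integrable M (\<lambda>\<omega>. 1 + Y i \<omega> ^ 4)" using integrable_Y_pow4[OF i] by simp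
  have "\<bar>y\<bar> \<le> 1 + y^4" "y^2 \<le> 1 + y^4" for y :: real
  proof -
    have "2 * y^2 \<le> 1 + y^4"
      using zero_le_square[of "y^2 - 1"] by (simp add: power2_eq_square power4_eq_xxxx algebra_simps)
    moreover have "2 * \<bar>y\<bar> \<le> 1 + y^2"
      using zero_le_square[of "\<bar>y\<bar> - 1"] by (simp add: power2_eq_square algebra_simps)
    moreover have "0 \<le> y^2" "0 \<le> y^4" by simp_all
    ultimately show "\<bar>y\<bar> \<le> 1 + y^4" "y^2 \<le> 1 + y^4" by linarith+
  qed
  then show "integrable M (Y i)" "integrable M (\<lambda>\<omega>. Y i \<omega> ^ 2)"
    using Y_measurable[OF i] by (auto intro!: Bochner_Integration.integrable_bound[OF dom])
qed

lemma integral_Y: "i \<in> {1..n} \<Longrightarrow> (\<integral>\<omega>. Y i \<omega> \<partial>M) = 0"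
proof -
  assume i: "i \<in> {1..n}"
  have 1: "1 \<in> {1..n}" using two_le_n by auto
  have "(\<integral>\<omega>. Y i \<omega> \<partial>M) = (\<integral>\<omega>. Y 1 \<omega> \<partial>M)"
    unfolding Y_def by (rule integral_entry_eq_first[OF i k]) simp
  also have "\<dots> = (\<integral>\<omega>. A 1 k \<omega> \<partial>M) - mu"
  proof -
    have "integrable M (\<lambda>\<omega>. Y 1 \<omega> + mu)" using integrable_Y[OF 1] by simp
    then have "integrable M (A 1 k)" by (simp add: Y_def)
    then show ?thesis unfolding Y_def by (simp add: prob_space)
  qed
  finally show ?thesis by (simp add: mu_def col_mu_def)
qed

lemma integral_Y_sq: "i \<in> {1..n} \<Longrightarrow> (\<integral>\<omega>. Y i \<omega> ^ 2 \<partial>M) = sigma2"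
proof -
  assume i: "i \<in> {1..n}"
  have "(\<integral>\<omega>. Y i \<omega> ^ 2 \<partial>M) = (\<integral>\<omega>. (A 1 k \<omega> - mu)^2 \<partial>M)"
    unfolding Y_def by (rule integral_entry_eq_first[OF i k, of "\<lambda>x. (x - mu)^2"]) simp
  then show ?thesis by (simp add: sigma2_def col_sig2_def mu_def col_mu_def)
qed

lemma indep_Y: "indep_vars (\<lambda>_. borel) Y {1..n}"
  unfolding Y_def[abs_def] by (rule indep_vars_compose2[OF indep_entries[OF k]]) simp

lemma indep_X: "indep_vars (\<lambda>_. borel) X {1..n}"
  unfolding X_def[abs_def] Y_def by (rule indep_vars_compose2[OF indep_entries[OF k]]) simp

lemma X_sq_eq: "X i \<omega> ^ 2 = Y i \<omega> ^ 4 - 2 * sigma2 * Y i \<omega> ^ 2 + sigma2^2"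
  unfolding X_def by (simp add: power2_eq_square power4_eq_xxxx algebra_simps)

lemma integrable_X_sq: "i \<in> {1..n} \<Longrightarrow> integrable M (\<lambda>\<omega>. X i \<omega> ^ 2)"
  unfolding X_sq_eq using integrable_Y_pow4 integrable_Y_sq by simp

lemma integral_X: "i \<in> {1..n} \<Longrightarrow> (\<integral>\<omega>. X i \<omega> \<partial>M) = 0"
  unfolding X_def using integral_Y_sq integrable_Y_sq by (simp add: prob_space)

lemma integral_X_sq_le: "i \<in> {1..n} \<Longrightarrow> (\<integral>\<omega>. X i \<omega> ^ 2 \<partial>M) \<le> M4"
proof -
  assume i: "i \<in> {1..n}"
  have "(\<integral>\<omega>. X i \<omega> ^ 2 \<partial>M) = (\<integral>\<omega>. Y i \<omega> ^ 4 \<partial>M) - sigma2^2"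
    unfolding X_sq_eq using integrable_Y_pow4[OF i] integrable_Y_sq[OF i] integral_Y_sq[OF i]
    by (simp add: prob_space power2_eq_square)
  also have "\<dots> \<le> (\<integral>\<omega>. Y i \<omega> ^ 4 \<partial>M)" by simp
  also have "\<dots> \<le> M4" using integral_pow4_le[OF i k] by (simp add: Y_def mu_def)
  finally show ?thesis .
qed

lemma Z_eq_standardize_Y: "i \<in> {1..n} \<Longrightarrow> Z i k \<omega> = standardize n i (\<lambda>j. Y j \<omega>)"
proof -
  assume i: "i \<in> {1..n}"
  have "Z i k \<omega> = standardize n i (\<lambda>j. Y j \<omega> + mu)"
    unfolding Z_def column_def Y_def by (rule standardize_cong) (use i in auto)
  also have "\<dots> = standardize n i (\<lambda>j. Y j \<omega>)" by (rule standardize_add_const) (use two_le_n in auto)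
  finally show ?thesis .
qed

lemma sum_Z_pow4_le: "(\<Sum>i=1..n. Z i k \<omega> ^ 4)
  \<le> 64 * (\<Sum>i=1..n. Y i \<omega> ^ 4) / sigma2^2 + 16 * (\<Sum>i=1..n. X i \<omega>)^2 / sigma2^2
    + 4 * (\<Sum>i=1..n. Y i \<omega>)^2 / sigma2"
proof -
  have "(\<Sum>i=1..n. Z i k \<omega> ^ 4) = (\<Sum>i=1..n. standardize n i (\<lambda>j. Y j \<omega>) ^ 4)"
    by (rule sum.cong) (auto simp: Z_eq_standardize_Y)
  also have "\<dots> \<le> 64 * (\<Sum>i=1..n. Y i \<omega> ^ 4) / sigma2^2 + 16 * (\<Sum>i=1..n. Y i \<omega> ^ 2 - sigma2)^2 / sigma2^2
      + 4 * (\<Sum>i=1..n. Y i \<omega>)^2 / sigma2"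
    using two_le_n by (intro sum_standardize_power4_le sigma2_pos) auto
  finally show ?thesis by (simp add: X_def)
qed

lemma integrable_sum_Z_pow4: "integrable M (\<lambda>\<omega>. \<Sum>i=1..n. Z i k \<omega> ^ 4)"
proof (intro Bochner_Integration.integrable_sum integrable_const_bound[where B="real n * real n"])
  fix i assume i: "i \<in> {1..n}"
  show "(\<lambda>\<omega>. Z i k \<omega> ^ 4) \<in> borel_measurable M" using Z_measurable k i by auto
  have "\<bar>Z i k \<omega> ^ 4\<bar> \<le> real n * real n" for \<omega>
  proof -
    have "Z i k \<omega> ^ 2 \<le> real n" unfolding Z_def using i by (rule standardize_sq_le)
    then have "(Z i k \<omega> ^ 2)^2 \<le> (real n)^2" by (intro power_mono) auto
    then have "Z i k \<omega> ^ 4 \<le> real n * real n" by (simp add: power4_eq_xxxx power2_eq_square mult.assoc)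
    then show ?thesis by (simp add: abs_of_nonneg zero_le_even_power)
  qed
  then show "AE \<omega> in M. norm (Z i k \<omega> ^ 4) \<le> real n * real n" by simp
qed

lemma integral_sum_Z_pow4_le:
  "(\<integral>\<omega>. (\<Sum>i=1..n. Z i k \<omega> ^ 4) \<partial>M) \<le> real n * (80 * M4 / \<delta>^2 + 4)"
proof -
  have int_Y4: "integrable M (\<lambda>\<omega>. \<Sum>i=1..n. Y i \<omega> ^ 4)" using integrable_Y_pow4 by auto
  note sum_X = indep_vars_integral_sum_square[OF indep_X _ integrable_X_sq integral_X]
  note sum_Y = indep_vars_integral_sum_square[OF indep_Y _ integrable_Y_sq integral_Y]
  have E_Y4: "(\<integral>\<omega>. (\<Sum>i=1..n. Y i \<omega> ^ 4) \<partial>M) \<le> real n * M4"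
  proof -
    have "(\<integral>\<omega>. (\<Sum>i=1..n. Y i \<omega> ^ 4) \<partial>M) = (\<Sum>i=1..n. \<integral>\<omega>. Y i \<omega> ^ 4 \<partial>M)"
      by (rule Bochner_Integration.integral_sum) (use integrable_Y_pow4 in auto)
    also have "\<dots> \<le> (\<Sum>i=1..n. M4)" using integral_pow4_le k by (intro sum_mono) (auto simp: Y_def mu_def)
    finally show ?thesis by simp
  qed
  have E_X: "(\<integral>\<omega>. (\<Sum>i=1..n. X i \<omega>)^2 \<partial>M) \<le> real n * M4"
    using sum_mono[of "{1..n}" "\<lambda>i. \<integral>\<omega>. X i \<omega> ^ 2 \<partial>M" "\<lambda>_. M4"] integral_X_sq_le sum_X(1) by auto
  have E_Y: "(\<integral>\<omega>. (\<Sum>i=1..n. Y i \<omega>)^2 \<partial>M) = real n * sigma2"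
    using sum_Y(1) integral_Y_sq by simp
  have M4: "M4 \<ge> 0"
  proof -
    have 1: "1 \<in> {1..n}" using two_le_n by auto
    have "0 \<le> (\<integral>\<omega>. (A 1 k \<omega> - col_mu M A k)^4 \<partial>M)" by (intro integral_nonneg_AE AE_I2) simp
    then show ?thesis using integral_pow4_le[OF 1 k] by linarith
  qed
  have "(\<integral>\<omega>. (\<Sum>i=1..n. Z i k \<omega> ^ 4) \<partial>M)
      \<le> (\<integral>\<omega>. 64 * (\<Sum>i=1..n. Y i \<omega> ^ 4) / sigma2^2 + 16 * (\<Sum>i=1..n. X i \<omega>)^2 / sigma2^2
           + 4 * (\<Sum>i=1..n. Y i \<omega>)^2 / sigma2 \<partial>M)"
    using integrable_sum_Z_pow4 int_Y4 sum_X(2) sum_Y(2) sum_Z_pow4_le by (intro integral_mono) auto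
  also have "\<dots> = 64 * (\<integral>\<omega>. (\<Sum>i=1..n. Y i \<omega> ^ 4) \<partial>M) / sigma2^2
      + 16 * (\<integral>\<omega>. (\<Sum>i=1..n. X i \<omega>)^2 \<partial>M) / sigma2^2 + 4 * (\<integral>\<omega>. (\<Sum>i=1..n. Y i \<omega>)^2 \<partial>M) / sigma2"
    using int_Y4 sum_X(2) sum_Y(2) by simp
  also have "\<dots> \<le> 64 * (real n * M4) / sigma2^2 + 16 * (real n * M4) / sigma2^2 + 4 * (real n * sigma2) / sigma2"
    using E_Y4 E_X E_Y sigma2_pos by (intro add_mono divide_right_mono mult_left_mono) auto
  also have "\<dots> = real n * (80 * M4 / sigma2^2 + 4)" using sigma2_pos by (simp add: field_simps)
  also have "\<dots> \<le> real n * (80 * M4 / \<delta>^2 + 4)"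
    using M4 \<delta>_pos sigma2_ge
    by (intro mult_left_mono add_right_mono divide_left_mono power_mono mult_nonneg_nonneg) auto
  finally show ?thesis .
qed

end

lemma integrable_fourth_power_term: "integrable M fourth_power_term"
  unfolding fourth_power_term_def[abs_def]
  by (intro Bochner_Integration.integrable_divide Bochner_Integration.integrable_sum integrable_sum_Z_pow4)

lemma integral_fourth_power_term_le:
  assumes N: "N \<ge> 1"
  shows "(\<integral>\<omega>. fourth_power_term \<omega> \<partial>M) \<le> (80 * M4 / \<delta>^2 + 4) / real N"
proof -
  have "(\<integral>\<omega>. fourth_power_term \<omega> \<partial>M)
      = (\<Sum>k=1..N. \<integral>\<omega>. (\<Sum>i=1..n. Z i k \<omega> ^ 4) \<partial>M) / (real n * real N ^ 2)"
    unfolding fourth_power_term_def using integrable_sum_Z_pow4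
    by (simp add: Bochner_Integration.integral_sum)
  also have "\<dots> \<le> (\<Sum>k=1..N. real n * (80 * M4 / \<delta>^2 + 4)) / (real n * real N ^ 2)"
    by (intro divide_right_mono sum_mono integral_sum_Z_pow4_le) auto
  also have "\<dots> = (80 * M4 / \<delta>^2 + 4) / real N"
    using N two_le_n by (simp add: power2_eq_square field_simps)
  finally show ?thesis .
qed

lemma overlap_sum_measurable: "overlap_sum \<in> borel_measurable M"
  unfolding overlap_sum_def[abs_def] using overlap_measurable
  by (intro borel_measurable_sum) (auto simp: mem_offdiag_pairs)

lemma integrable_overlap_sum_sq: "integrable M (\<lambda>\<omega>. overlap_sum \<omega> ^ 2)"
proof -
  have expand: "(\<lambda>\<omega>. overlap_sum \<omega> ^ 2) = (\<lambda>\<omega>. \<Sum>q\<in>offdiag_pairs N. \<Sum>q'\<in>offdiag_pairs N.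
      overlap (fst q) (snd q) \<omega> * overlap (fst q') (snd q') \<omega>)"
    unfolding overlap_sum_def by (simp add: power2_eq_square sum_product)
  show ?thesis unfolding expand
    by (rule integral_double_sum(2), rule integrable_overlap_mult) (auto simp: mem_offdiag_pairs)
qed

text \<open>Markov's inequality for the fourth-power term and Chebyshev's inequality for the overlaps.\<close>

lemma prob_offdiag_Gmat_sq_deviation_le:
  assumes N: "N \<ge> 1" and e: "e > 0" and close: "\<bar>real n / real N - a\<bar> + 1 / (real n - 1) \<le> e / 3"
  shows "measure M {\<omega> \<in> space M. \<bar>(\<Sum>i\<in>{1..n}. \<Sum>j\<in>{1..n} - {i}. (Gmat n N A i j \<omega>)^2) / real n - a\<bar> > e}
    \<le> 3 * (80 * M4 / \<delta>^2 + 4) / (e * real N) + 216 * real n / (e^2 * real N ^ 2)"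
proof -
  define c where "c = e / 3 * (real n * real N ^ 2)"
  have c: "c > 0" unfolding c_def using e N two_le_n by simp
  define B1 where "B1 = {\<omega> \<in> space M. e / 3 \<le> fourth_power_term \<omega>}"
  define B2 where "B2 = {\<omega> \<in> space M. c^2 \<le> overlap_sum \<omega> ^ 2}"
  have [measurable]: "fourth_power_term \<in> borel_measurable M"
    using integrable_fourth_power_term by auto
  note overlap_sum_measurable[measurable]
  have B1: "B1 \<in> sets M" and B2: "B2 \<in> sets M" unfolding B1_def B2_def by measurable
  have "AE \<omega> in M. \<forall>k\<in>{1..N}. (\<Sum>i=1..n. Z i k \<omega> ^ 2) = real n"
    by (rule AE_finite_allI[OF finite_atLeastAtMost]) (rule AE_sum_Z_sq)
  then have AE: "AE \<omega> in M. \<omega> \<in> {\<omega> \<in> space M. \<bar>(\<Sum>i\<in>{1..n}. \<Sum>j\<in>{1..n} - {i}. (Gmat n N A i j \<omega>)^2) / real n - a\<bar> > e}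
      \<longrightarrow> \<omega> \<in> B1 \<union> B2"
    by eventually_elim (use large_deviation_imp_large_terms[OF N close] in \<open>auto simp: B1_def B2_def c_def\<close>)
  have "measure M {\<omega> \<in> space M. \<bar>(\<Sum>i\<in>{1..n}. \<Sum>j\<in>{1..n} - {i}. (Gmat n N A i j \<omega>)^2) / real n - a\<bar> > e}
      \<le> measure M (B1 \<union> B2)"
    by (rule finite_measure_mono_AE[OF AE]) (use B1 B2 in auto)
  also have "\<dots> \<le> measure M B1 + measure M B2" by (rule measure_Un_le[OF B1 B2])
  also have "measure M B1 \<le> (\<integral>\<omega>. fourth_power_term \<omega> \<partial>M) / (e / 3)"
    unfolding B1_def using fourth_power_term_nonneg e
    by (intro integral_Markov_inequality_measure[OF integrable_fourth_power_term]) auto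
  also have "\<dots> \<le> (80 * M4 / \<delta>^2 + 4) / real N / (e / 3)"
    using integral_fourth_power_term_le[OF N] e by (intro divide_right_mono) auto
  also have "measure M B2 \<le> (\<integral>\<omega>. overlap_sum \<omega> ^ 2 \<partial>M) / c^2"
    unfolding B2_def using c
    by (intro integral_Markov_inequality_measure[OF integrable_overlap_sum_sq]) auto
  also have "\<dots> \<le> 24 * real N ^ 2 * real n ^ 3 / c^2"
    using integral_overlap_sum_sq_le by (intro divide_right_mono) auto
  also have "(80 * M4 / \<delta>^2 + 4) / real N / (e / 3) + 24 * real N ^ 2 * real n ^ 3 / c^2
      = 3 * (80 * M4 / \<delta>^2 + 4) / (e * real N) + 216 * real n / (e^2 * real N ^ 2)"
    unfolding c_def using e N two_le_n by (simp add: field_simps power2_eq_square power3_eq_cube)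
  finally show ?thesis by simp
qed

end

section \<open>Convergence in probability\<close>

lemma integral_pow4_le_of_exp_sq_bound:
  fixes Y :: "'a \<Rightarrow> real"
  assumes Y: "Y \<in> borel_measurable M" and t: "t > 0" and s: "s \<le> smax"
    and int: "integrable M (\<lambda>\<omega>. exp (t * (Y \<omega>^2 - s)))"
    and bound: "(\<integral>\<omega>. exp (t * (Y \<omega>^2 - s)) \<partial>M) \<le> B"
  shows "integrable M (\<lambda>\<omega>. Y \<omega>^4)"
    and "(\<integral>\<omega>. Y \<omega>^4 \<partial>M) \<le> 2 * exp (t * smax) / t^2 * B"
proof -
  define K where "K = 2 * exp (t * smax) / t^2"
  have K: "K \<ge> 0" unfolding K_def by simp
  have pointwise: "Y \<omega>^4 \<le> K * exp (t * (Y \<omega>^2 - s))" for \<omega>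
  proof -
    have x: "0 \<le> t * Y \<omega>^2" using t by simp
    have "(t * Y \<omega>^2)^2 / 2 \<le> exp (t * Y \<omega>^2)"
      using exp_lower_Taylor_quadratic[OF x] x by linarith
    also have "exp (t * Y \<omega>^2) = exp (t * s) * exp (t * (Y \<omega>^2 - s))"
      by (simp add: exp_add[symmetric] algebra_simps)
    also have "\<dots> \<le> exp (t * smax) * exp (t * (Y \<omega>^2 - s))"
      using s t by (intro mult_right_mono) auto
    finally show ?thesis
      unfolding K_def using t by (simp add: power_mult_distrib power2_eq_square power4_eq_xxxx field_simps)
  qed
  have int_K: "integrable M (\<lambda>\<omega>. K * exp (t * (Y \<omega>^2 - s)))" using int by simp
  show int_Y: "integrable M (\<lambda>\<omega>. Y \<omega>^4)"
    using Y pointwise K by (intro Bochner_Integration.integrable_bound[OF int_K]) (auto simp: abs_mult)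
  have "(\<integral>\<omega>. Y \<omega>^4 \<partial>M) \<le> (\<integral>\<omega>. K * exp (t * (Y \<omega>^2 - s)) \<partial>M)"
    by (rule integral_mono[OF int_Y int_K pointwise])
  also have "\<dots> \<le> K * B" using bound K by (simp add: mult_left_mono)
  finally show "(\<integral>\<omega>. Y \<omega>^4 \<partial>M) \<le> 2 * exp (t * smax) / t^2 * B" unfolding K_def .
qed

lemma uniform_pow4_bound_of_exp_sq_bound:
  fixes Y :: "'m \<Rightarrow> 'i \<Rightarrow> 'k \<Rightarrow> 'a \<Rightarrow> real"
  assumes Y: "\<And>m i k. i \<in> I m \<Longrightarrow> k \<in> K m \<Longrightarrow> Y m i k \<in> borel_measurable (M m)"
    and s: "\<And>m k. k \<in> K m \<Longrightarrow> s m k \<le> smax"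
    and mgf: "\<exists>d>0. \<exists>C>0. \<exists>V0. open V0 \<and> (0::real) \<in> V0 \<and>
      (\<forall>m. \<forall>k\<in>K m. \<forall>t\<in>V0.
        (\<forall>i\<in>I m. integrable (M m) (\<lambda>\<omega>. exp (t * (Y m i k \<omega>^2 - s m k))) \<and>
          (\<integral>\<omega>. exp (t * (Y m i k \<omega>^2 - s m k)) \<partial>M m) \<le> C * exp (d * t^2)) \<and> R d C m k t)"
  shows "\<exists>M4. \<forall>m. \<forall>k\<in>K m. \<forall>i\<in>I m.
    integrable (M m) (\<lambda>\<omega>. Y m i k \<omega>^4) \<and> (\<integral>\<omega>. Y m i k \<omega>^4 \<partial>M m) \<le> M4"
proof -
  obtain d C V0 where V0: "open V0" "0 \<in> V0" and bound:
    "\<And>m k t i. k \<in> K m \<Longrightarrow> t \<in> V0 \<Longrightarrow> i \<in> I m \<Longrightarrow>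
       integrable (M m) (\<lambda>\<omega>. exp (t * (Y m i k \<omega>^2 - s m k))) \<and>
       (\<integral>\<omega>. exp (t * (Y m i k \<omega>^2 - s m k)) \<partial>M m) \<le> C * exp (d * t^2)"
    using mgf by metis
  obtain r where "r > 0" "ball 0 r \<subseteq> V0" using V0 open_contains_ball by blast
  then have t: "r / 2 > 0" "r / 2 \<in> V0" by (auto simp: dist_real_def)
  show ?thesis
    using integral_pow4_le_of_exp_sq_bound[OF Y t(1) s] bound[OF _ t(2)] by blast
qed

lemma eventually_ratio_close:
  assumes n: "filterlim n at_top sequentially" and ratio: "(\<lambda>m. real (n m) / real (N m)) \<longlonglongrightarrow> a"
    and e: "e > 0"
  shows "eventually (\<lambda>m. 2 \<le> n m \<and> \<bar>real (n m) / real (N m) - a\<bar> + 1 / (real (n m) - 1) \<le> e / 3) sequentially"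
proof -
  have "eventually (\<lambda>m. real (n m) \<ge> 2 + 6 / e) sequentially"
    using filterlim_compose[OF filterlim_real_sequentially n] unfolding filterlim_at_top by blast
  moreover have "eventually (\<lambda>m. \<bar>real (n m) / real (N m) - a\<bar> < e / 6) sequentially"
    using tendstoD[OF ratio, of "e / 6"] e by (simp add: dist_real_def)
  ultimately show ?thesis
  proof eventually_elim
    case (elim m)
    have "6 / e > 0" using e by simp
    then have n2: "real (n m) \<ge> 2" using elim(1) by linarith
    have "6 \<le> e * (real (n m) - 1)"
      using mult_left_mono[of "1 + 6 / e" "real (n m) - 1" e] elim(1) e by (simp add: field_simps)
    then have "1 / (real (n m) - 1) \<le> e / 6" using n2 e by (simp add: field_simps)
    then show ?case using elim(2) n2 by simp
  qed
qed

lemma deviation_bound_tendsto_0: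
  assumes N: "filterlim N at_top sequentially" and ratio: "(\<lambda>m. real (n m) / real (N m)) \<longlonglongrightarrow> a"
  shows "(\<lambda>m. c1 / (e * real (N m)) + c2 * real (n m) / (e^2 * real (N m) ^ 2)) \<longlonglongrightarrow> 0"
proof -
  have "(\<lambda>m. inverse (real (N m))) \<longlonglongrightarrow> 0"
    by (intro tendsto_inverse_0_at_top filterlim_compose[OF filterlim_real_sequentially N])
  then have "(\<lambda>m. c1 / e * inverse (real (N m)) + c2 / e^2 * (real (n m) / real (N m)) * inverse (real (N m)))
      \<longlonglongrightarrow> c1 / e * 0 + c2 / e^2 * a * 0"
    by (intro tendsto_intros ratio)
  then show ?thesis by (simp add: field_simps power2_eq_square)
qed

theorem lemma1:
  fixes M :: "nat \<Rightarrow> 'a measure"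
    and n N :: "nat \<Rightarrow> nat"
    and A :: "nat \<Rightarrow> nat \<Rightarrow> nat \<Rightarrow> 'a \<Rightarrow> real"
    and a :: real
  assumes prob: "\<And>m. prob_space (M m)"
    and meas: "\<And>m i k. i \<in> {1..n m} \<Longrightarrow> k \<in> {1..N m} \<Longrightarrow> A m i k \<in> borel_measurable (M m)"
    and col_indep: "\<And>m. prob_space.indep_vars (M m) (\<lambda>k. PiM {1..n m} (\<lambda>_. borel))
                       (\<lambda>k \<omega>. restrict (\<lambda>i. A m i k \<omega>) {1..n m}) {1..N m}"
    and entry_indep: "\<And>m k. k \<in> {1..N m} \<Longrightarrow>
                       prob_space.indep_vars (M m) (\<lambda>_. borel) (\<lambda>i. A m i k) {1..n m}"
    and ident_distr: "\<And>m i k. i \<in> {1..n m} \<Longrightarrow> k \<in> {1..N m} \<Longrightarrow>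
                       distr (M m) borel (A m i k) = distr (M m) borel (A m 1 k)"
    and svar_pos: "\<And>m k. k \<in> {1..N m} \<Longrightarrow> AE \<omega> in M m. col_svar (n m) (A m) k \<omega> > 0"
    and assm1: "\<exists>d>0. \<exists>C>0. \<exists>V0. open V0 \<and> (0::real) \<in> V0 \<and>
       (\<forall>m. \<forall>k\<in>{1..N m}. \<forall>t\<in>V0.
          (\<forall>i\<in>{1..n m}.
             integrable (M m) (\<lambda>\<omega>. exp (t * ((A m i k \<omega> - col_mu (M m) (A m) k)^2 - col_sig2 (M m) (A m) k))) \<and>
             (\<integral>\<omega>. exp (t * ((A m i k \<omega> - col_mu (M m) (A m) k)^2 - col_sig2 (M m) (A m) k)) \<partial>M m)
               \<le> C * exp (d * t^2)) \<and>
          (\<forall>i\<in>{1..n m}.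
             integrable (M m) (\<lambda>\<omega>. exp (t * (A m i k \<omega> - col_mu (M m) (A m) k))) \<and>
             (\<integral>\<omega>. exp (t * (A m i k \<omega> - col_mu (M m) (A m) k)) \<partial>M m) \<le> C * exp (d * t^2)) \<and>
          (\<forall>i\<in>{1..n m}. \<forall>j\<in>{1..n m}. i \<noteq> j \<longrightarrow>
             integrable (M m) (\<lambda>\<omega>. exp (t * ((A m i k \<omega> - col_mu (M m) (A m) k) * (A m j k \<omega> - col_mu (M m) (A m) k)))) \<and>
             (\<integral>\<omega>. exp (t * ((A m i k \<omega> - col_mu (M m) (A m) k) * (A m j k \<omega> - col_mu (M m) (A m) k))) \<partial>M m)
               \<le> C * exp (d * t^2)))"
    and assm2: "\<exists>\<delta>min>0. \<exists>\<delta>max. \<forall>m. \<forall>k\<in>{1..N m}.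
                  \<delta>min \<le> col_sig2 (M m) (A m) k \<and> col_sig2 (M m) (A m) k \<le> \<delta>max"
    and n_lim: "filterlim n at_top sequentially"
    and N_lim: "filterlim N at_top sequentially"
    and ratio: "(\<lambda>m. real (n m) / real (N m)) \<longlonglongrightarrow> a"
    and a_pos: "a > 0"
  shows "\<forall>\<epsilon>>0. (\<lambda>m. measure (M m) {\<omega> \<in> space (M m).
            \<bar>(\<Sum>i\<in>{1..n m}. \<Sum>j\<in>{1..n m} - {i}. (Gmat (n m) (N m) (A m) i j \<omega>)^2) / real (n m) - a\<bar> > \<epsilon>})
          \<longlonglongrightarrow> 0"
proof (intro allI impI)
  fix e :: real assume e: "e > 0"
  let ?dev = "\<lambda>m. measure (M m) {\<omega> \<in> space (M m).
    \<bar>(\<Sum>i\<in>{1..n m}. \<Sum>j\<in>{1..n m} - {i}. (Gmat (n m) (N m) (A m) i j \<omega>)^2) / real (n m) - a\<bar> > e}"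
  obtain \<delta> \<delta>max where \<delta>: "\<delta> > 0"
    and sig2: "\<And>m k. k \<in> {1..N m} \<Longrightarrow> \<delta> \<le> col_sig2 (M m) (A m) k \<and> col_sig2 (M m) (A m) k \<le> \<delta>max"
    using assm2 by blast
  obtain M4 where pow4: "\<forall>m. \<forall>k\<in>{1..N m}. \<forall>i\<in>{1..n m}.
      integrable (M m) (\<lambda>\<omega>. (A m i k \<omega> - col_mu (M m) (A m) k)^4)
      \<and> (\<integral>\<omega>. (A m i k \<omega> - col_mu (M m) (A m) k)^4 \<partial>M m) \<le> M4"
    using uniform_pow4_bound_of_exp_sq_bound[OF _ _ assm1] meas sig2 by fastforce
  let ?bound = "\<lambda>m. 3 * (80 * M4 / \<delta>^2 + 4) / (e * real (N m)) + 216 * real (n m) / (e^2 * real (N m) ^ 2)"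
  have dev_le: "?dev m \<le> ?bound m"
    if close: "2 \<le> n m \<and> \<bar>real (n m) / real (N m) - a\<bar> + 1 / (real (n m) - 1) \<le> e / 3" and N: "1 \<le> N m" for m
  proof -
    interpret gram_model_moments "M m" "n m" "N m" "A m" M4 \<delta>
      by (intro gram_model_moments.intro gram_model.intro gram_model_axioms.intro
          gram_model_moments_axioms.intro prob meas col_indep entry_indep ident_distr svar_pos)
        (use close \<delta> sig2 pow4 in auto)
    show ?thesis using prob_offdiag_Gmat_sq_deviation_le[OF N e] close by blast
  qed
  have "eventually (\<lambda>m. 1 \<le> N m) sequentially" using N_lim unfolding filterlim_at_top by blast
  with eventually_ratio_close[OF n_lim ratio e]
  have "eventually (\<lambda>m. ?dev m \<le> ?bound m) sequentially"
    by eventually_elim (rule dev_le)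
  then show "?dev \<longlonglongrightarrow> 0"
    by (intro tendsto_sandwich[OF _ _ tendsto_const deviation_bound_tendsto_0[OF N_lim ratio]]) auto
qed

end
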